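(* Let $\mathsf{C}$ be a depth-$D$ Clifford circuit on $n$ qubits consisting only of one- and two-qubit Clifford unitaries, and let $F$ be local stochastic Pauli noise of strength $p$ on $\mathsf{C}$. Then there is local stochastic Pauli noise $F'$ on $\mathsf{C}$ of strength $$p'=D\cdot\big(2p^{2^{-(D-1)}}\big)^{1/D}$$ such that (i) $\mathrm{supp}(F')\subseteq\{D\}\times[n]$ and (ii) $F\bowtie\mathsf{C}=F'\bowtie\mathsf{C}$.
   Context: Wires of a depth-$D$ circuit on $n$ qubits: $\mathcal{W}_{\mathsf{C}}=[D]\times[n]$, with $(t,j)$ representing qubit $j$ after layer $t$. Local stochastic Pauli noise of strength $p$: a random function $F:\mathcal{W}_{\mathsf{C}}\to\mathcal{P}_1$ (single-qubit Paulis) with $\Pr[W\subseteq\mathrm{supp}(F)]\le p^{|W|}$ for all $W\subseteq\mathcal{W}_{\mathsf{C}}$, where $\mathrm{supp}(F)=\{w:F(w)\not\propto I\}$. $F\bowtie\mathsf{C}$ denotes the noisy execution in which $F(t,j)$ is applied to qubit $j$ right after layer $t$. *)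

theory Defs
  imports "HOL-Probability.Probability" "Jordan_Normal_Form.Matrix"
begin

text \<open>An operator on n qubits is a complex 2^n x 2^n matrix. Computational basis index i
  encodes qubit l in its l-th binary digit, qubits are numbered 0..n-1.\<close>

definition qbit :: "nat \<Rightarrow> nat \<Rightarrow> nat" where
  "qbit l i = (i div 2 ^ l) mod 2"

definition local_index :: "nat list \<Rightarrow> nat \<Rightarrow> nat" where
  "local_index qs i = (\<Sum>m<length qs. 2 ^ m * qbit (qs ! m) i)"

text \<open>Embedding of a (2^k x 2^k) operator U acting on the qubit list qs (length k)
  into the n-qubit space (tensor product with identity on the remaining qubits).\<close>
definition embed :: "nat \<Rightarrow> nat list \<Rightarrow> complex mat \<Rightarrow> complex mat" where
  "embed n qs U = mat (2 ^ n) (2 ^ n)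
     (\<lambda>(i, k). if (\<forall>l<n. l \<notin> set qs \<longrightarrow> qbit l i = qbit l k)
               then U $$ (local_index qs i, local_index qs k) else 0)"

definition adj :: "complex mat \<Rightarrow> complex mat" where
  "adj U = mat (dim_col U) (dim_row U) (\<lambda>(i, j). cnj (U $$ (j, i)))"

definition prod_mats :: "nat \<Rightarrow> complex mat list \<Rightarrow> complex mat" where
  "prod_mats d Ms = foldr (\<lambda>A B. A * B) Ms (1\<^sub>m d)"

definition pauliI :: "complex mat" where "pauliI = 1\<^sub>m 2"
definition pauliX :: "complex mat" where "pauliX = mat_of_rows_list 2 [[0, 1], [1, 0]]"
definition pauliY :: "complex mat" where "pauliY = mat_of_rows_list 2 [[0, -\<i>], [\<i>, 0]]"
definition pauliZ :: "complex mat" where "pauliZ = mat_of_rows_list 2 [[1, 0], [0, -1]]"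

definition phases :: "complex set" where "phases = {1, -1, \<i>, -\<i>}"

definition pauli_basis :: "complex mat set" where
  "pauli_basis = {pauliI, pauliX, pauliY, pauliZ}"

definition pauli_group :: "nat \<Rightarrow> complex mat set" where
  "pauli_group k = {c \<cdot>\<^sub>m prod_mats (2 ^ k) (map (\<lambda>m. embed k [m] (\<sigma>s ! m)) [0..<k]) | c \<sigma>s.
        c \<in> phases \<and> length \<sigma>s = k \<and> set \<sigma>s \<subseteq> pauli_basis}"

definition pauli1 :: "complex mat set" where
  "pauli1 = {c \<cdot>\<^sub>m \<sigma> | c \<sigma>. c \<in> phases \<and> \<sigma> \<in> pauli_basis}"

definition unitary_mat :: "nat \<Rightarrow> complex mat \<Rightarrow> bool" where
  "unitary_mat d U \<longleftrightarrow> U \<in> carrier_mat d d \<and> U * adj U = 1\<^sub>m d"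

definition clifford :: "nat \<Rightarrow> complex mat \<Rightarrow> bool" where
  "clifford k U \<longleftrightarrow> unitary_mat (2 ^ k) U \<and>
     (\<forall>P \<in> pauli_group k. U * P * adj U \<in> pauli_group k)"

text \<open>A gate is a list of distinct target qubits together with a unitary on them;
  a layer is a list of gates on pairwise disjoint qubits; a depth-D circuit is a list of D layers.\<close>
type_synonym gate = "nat list \<times> complex mat"
type_synonym layer = "gate list"
type_synonym circuit = "layer list"

definition valid_gate_12 :: "nat \<Rightarrow> gate \<Rightarrow> bool" where
  "valid_gate_12 n g \<longleftrightarrow> (case g of (qs, U) \<Rightarrow>
      distinct qs \<and> set qs \<subseteq> {0..<n} \<and> length qs \<in> {1, 2} \<and> clifford (length qs) U)"

definition valid_layer :: "nat \<Rightarrow> layer \<Rightarrow> bool" where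
  "valid_layer n L \<longleftrightarrow> (\<forall>g \<in> set L. valid_gate_12 n g) \<and>
     (\<forall>a<length L. \<forall>b<length L. a \<noteq> b \<longrightarrow> set (fst (L ! a)) \<inter> set (fst (L ! b)) = {})"

definition clifford_circuit_12 :: "nat \<Rightarrow> nat \<Rightarrow> circuit \<Rightarrow> bool" where
  "clifford_circuit_12 D n C \<longleftrightarrow> length C = D \<and> (\<forall>L \<in> set C. valid_layer n L)"

definition layer_op :: "nat \<Rightarrow> layer \<Rightarrow> complex mat" where
  "layer_op n L = prod_mats (2 ^ n) (map (\<lambda>(qs, U). embed n qs U) L)"

text \<open>Wires (t, j): qubit j after layer t, t \<in> [D] = \{1..D\}, j \<in> \{0..<n\}.\<close>
definition wires :: "nat \<Rightarrow> nat \<Rightarrow> (nat \<times> nat) set" where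
  "wires D n = {1..D} \<times> {0..<n}"

type_synonym noise = "nat \<times> nat \<Rightarrow> complex mat"

definition pauli_noise :: "nat \<Rightarrow> nat \<Rightarrow> noise \<Rightarrow> bool" where
  "pauli_noise D n f \<longleftrightarrow> (\<forall>w \<in> wires D n. f w \<in> pauli1)"

definition supp :: "nat \<Rightarrow> nat \<Rightarrow> noise \<Rightarrow> (nat \<times> nat) set" where
  "supp D n f = {w \<in> wires D n. \<not> (\<exists>c. f w = c \<cdot>\<^sub>m 1\<^sub>m 2)}"

definition local_stochastic :: "'\<omega> pmf \<Rightarrow> nat \<Rightarrow> nat \<Rightarrow> real \<Rightarrow> ('\<omega> \<Rightarrow> noise) \<Rightarrow> bool" where
  "local_stochastic M D n p F \<longleftrightarrow> (\<forall>\<omega>. pauli_noise D n (F \<omega>)) \<and>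
     (\<forall>W \<subseteq> wires D n. measure_pmf.prob M {\<omega>. W \<subseteq> supp D n (F \<omega>)} \<le> p ^ card W)"

text \<open>Noisy execution F \<bowtie> C: the Pauli F(t,j) is applied to qubit j right after layer t.\<close>
definition noise_layer :: "nat \<Rightarrow> noise \<Rightarrow> nat \<Rightarrow> complex mat" where
  "noise_layer n f t = prod_mats (2 ^ n) (map (\<lambda>j. embed n [j] (f (t, j))) [0..<n])"

fun noisy_exec_aux :: "nat \<Rightarrow> noise \<Rightarrow> nat \<Rightarrow> circuit \<Rightarrow> complex mat" where
  "noisy_exec_aux n f t [] = 1\<^sub>m (2 ^ n)"
| "noisy_exec_aux n f t (L # Ls) =
     noisy_exec_aux n f (Suc t) Ls * (noise_layer n f t * layer_op n L)"

definition noisy_exec :: "nat \<Rightarrow> circuit \<Rightarrow> noise \<Rightarrow> complex mat" where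
  "noisy_exec n C f = noisy_exec_aux n f 1 C"

end

theory Submission
  imports Defs "Jordan_Normal_Form.Determinant"
begin

text \<open>Conjugating a Pauli string by a one- or two-qubit Clifford gate gives again a Pauli
  string, which differs from the original one only on the qubits of the gate. Hence every
  fault of F can be commuted to the end of the circuit, and the faults combine into a Pauli
  string A on the last layer with the same noisy execution. A non-trivial factor of A on
  output qubit j comes from a fault in the past light cone of j, which contains at most
  D 2^(D-1) wires, while every wire lies in the past light cones of at most 2^(D-1) output
  qubits. So if W \<subseteq> supp F', choosing one fault in the light cone of each w \<in> W hits at least
  |W| / 2^(D-1) distinct faulty wires, and a union bound over these choices gives
  Pr[W \<subseteq> supp F'] \<le> (D 2^(D-1) q)^|W| with q = p^(2^-(D-1)). Finally
  D 2^(D-1) q \<le> D (2q)^(1/D) whenever D (2q)^(1/D) < 1; otherwise the claimed bound exceeds 1.\<close>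

lemma smult_one_mat[simp]: "1 \<cdot>\<^sub>m (A :: 'a :: monoid_mult mat) = A"
  by (rule eq_matI) auto

lemma smult_smult_mat[simp]: "a \<cdot>\<^sub>m (b \<cdot>\<^sub>m (A :: 'a :: semigroup_mult mat)) = (a * b) \<cdot>\<^sub>m A"
  by (rule eq_matI) (auto simp: mult.assoc)

lemma smult_mult_smult_mat:
  assumes "A \<in> carrier_mat nr n" "B \<in> carrier_mat n nc"
  shows "(a \<cdot>\<^sub>m A) * (b \<cdot>\<^sub>m B) = (a * b) \<cdot>\<^sub>m (A * (B :: 'a :: comm_semiring_0 mat))"
proof -
  have "(a \<cdot>\<^sub>m A) * (b \<cdot>\<^sub>m B) = a \<cdot>\<^sub>m (A * (b \<cdot>\<^sub>m B))"
    using assms by (intro mult_smult_assoc_mat[of A nr n "b \<cdot>\<^sub>m B" nc]) auto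
  also have "\<dots> = a \<cdot>\<^sub>m (b \<cdot>\<^sub>m (A * B))"
    using assms by (simp add: mult_smult_distrib)
  finally show ?thesis
    by (simp add: smult_smult_mat)
qed

lemma smult_one_mat_commute:
  assumes "X \<in> carrier_mat d d"
  shows "X * (c \<cdot>\<^sub>m 1\<^sub>m d) = (c \<cdot>\<^sub>m 1\<^sub>m d) * (X :: 'a :: comm_semiring_1 mat)"
proof -
  have "X * (c \<cdot>\<^sub>m 1\<^sub>m d) = c \<cdot>\<^sub>m X"
    using assms by (simp add: mult_smult_distrib[OF assms one_carrier_mat])
  also have "\<dots> = (c \<cdot>\<^sub>m 1\<^sub>m d) * X"
    using assms by (simp add: mult_smult_assoc_mat[OF one_carrier_mat assms])
  finally show ?thesis .
qed

lemma assoc_mult_mat_dims: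
  assumes "dim_col A = dim_row B" "dim_col B = dim_row C"
  shows "(A * B) * C = A * (B * (C :: 'a :: semiring_0 mat))"
  by (rule assoc_mult_mat[of A "dim_row A" "dim_col A" B "dim_col B" C "dim_col C"])
     (use assms in \<open>auto intro: carrier_matI\<close>)

definition propto_id :: "complex mat \<Rightarrow> bool" where
  "propto_id a \<longleftrightarrow> (\<exists>c. a = c \<cdot>\<^sub>m 1\<^sub>m 2)"

lemma pauli_basis_carrier: "\<sigma> \<in> pauli_basis \<Longrightarrow> \<sigma> \<in> carrier_mat 2 2"
  by (auto simp: pauli_basis_def pauliI_def pauliX_def pauliY_def pauliZ_def mat_of_rows_list_def)

lemma pauli1_carrier: "a \<in> pauli1 \<Longrightarrow> a \<in> carrier_mat 2 2"
  by (auto simp: pauli1_def dest: pauli_basis_carrier)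

lemma phases_mult: "c \<in> phases \<Longrightarrow> d \<in> phases \<Longrightarrow> c * d \<in> phases"
  by (auto simp: phases_def)

lemma one_in_phases: "1 \<in> phases"
  by (simp add: phases_def)

lemma prod_list_phases: "\<forall>x\<in>set xs. f x \<in> phases \<Longrightarrow> prod_list (map f xs) \<in> phases"
  by (induction xs) (auto simp: one_in_phases phases_mult)

lemma pauli_basis_mult:
  assumes "\<sigma> \<in> pauli_basis" "\<tau> \<in> pauli_basis"
  shows "\<exists>c \<rho>. c \<in> phases \<and> \<rho> \<in> pauli_basis \<and> \<sigma> * \<tau> = c \<cdot>\<^sub>m \<rho>"
proof -
  note defs = pauliI_def pauliX_def pauliY_def pauliZ_def mat_of_rows_list_def scalar_prod_def
    less_Suc_eq numeral_2_eq_2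
  have I: "pauliI * x = 1 \<cdot>\<^sub>m x" "x * pauliI = 1 \<cdot>\<^sub>m x" if "x \<in> pauli_basis" for x
    using pauli_basis_carrier[OF that] by (simp_all add: pauliI_def)
  have P: "pauliX * pauliX = 1 \<cdot>\<^sub>m pauliI" "pauliY * pauliY = 1 \<cdot>\<^sub>m pauliI"
    "pauliZ * pauliZ = 1 \<cdot>\<^sub>m pauliI" "pauliX * pauliY = \<i> \<cdot>\<^sub>m pauliZ"
    "pauliY * pauliX = (-\<i>) \<cdot>\<^sub>m pauliZ" "pauliY * pauliZ = \<i> \<cdot>\<^sub>m pauliX"
    "pauliZ * pauliY = (-\<i>) \<cdot>\<^sub>m pauliX" "pauliZ * pauliX = \<i> \<cdot>\<^sub>m pauliY"
    "pauliX * pauliZ = (-\<i>) \<cdot>\<^sub>m pauliY"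
    by (rule eq_matI; auto simp: defs)+
  have ph: "1 \<in> phases" "\<i> \<in> phases" "-\<i> \<in> phases"
    by (auto simp: phases_def)
  have b: "pauliI \<in> pauli_basis" "pauliX \<in> pauli_basis" "pauliY \<in> pauli_basis" "pauliZ \<in> pauli_basis"
    by (auto simp: pauli_basis_def)
  have witness: "\<And>c \<rho>. c \<in> phases \<Longrightarrow> \<rho> \<in> pauli_basis \<Longrightarrow> \<sigma> * \<tau> = c \<cdot>\<^sub>m \<rho> \<Longrightarrow> ?thesis"
    by blast
  from assms have "\<sigma> = pauliI \<or> \<sigma> = pauliX \<or> \<sigma> = pauliY \<or> \<sigma> = pauliZ"
    and "\<tau> = pauliI \<or> \<tau> = pauliX \<or> \<tau> = pauliY \<or> \<tau> = pauliZ"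
    by (auto simp: pauli_basis_def)
  then show ?thesis
    by (elim disjE) (rule witness, rule ph, rule b, use P I b in simp; fail)+
qed

lemma pauli1_mult:
  assumes "a \<in> pauli1" "b \<in> pauli1"
  shows "a * b \<in> pauli1"
proof -
  obtain c1 \<sigma> where a: "c1 \<in> phases" "\<sigma> \<in> pauli_basis" "a = c1 \<cdot>\<^sub>m \<sigma>"
    using assms(1) by (auto simp: pauli1_def)
  obtain c2 \<tau> where b: "c2 \<in> phases" "\<tau> \<in> pauli_basis" "b = c2 \<cdot>\<^sub>m \<tau>"
    using assms(2) by (auto simp: pauli1_def)
  obtain c \<rho> where c: "c \<in> phases" "\<rho> \<in> pauli_basis" "\<sigma> * \<tau> = c \<cdot>\<^sub>m \<rho>"
    using pauli_basis_mult[OF a(2) b(2)] by blast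
  have "\<sigma> \<in> carrier_mat 2 2" "\<tau> \<in> carrier_mat 2 2"
    using a b pauli_basis_carrier by auto
  then have "a * b = (c1 * c2 * c) \<cdot>\<^sub>m \<rho>"
    by (simp add: a b c smult_mult_smult_mat)
  then show ?thesis
    using a b c by (auto simp: pauli1_def intro!: phases_mult)
qed

lemma one_in_pauli1: "1\<^sub>m 2 \<in> pauli1"
  unfolding pauli1_def pauli_basis_def pauliI_def
  by (rule CollectI, rule exI[of _ 1], rule exI[of _ "1\<^sub>m 2"]) (auto simp: one_in_phases)

lemma propto_id_mult: "propto_id a \<Longrightarrow> propto_id b \<Longrightarrow> propto_id (a * b)"
  unfolding propto_id_def by (auto simp: smult_mult_smult_mat[of _ 2 2 _ 2])

lemma propto_id_one: "propto_id (1\<^sub>m 2)"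
  unfolding propto_id_def by (rule exI[of _ 1]) simp

fun of_bits :: "nat \<Rightarrow> (nat \<Rightarrow> nat) \<Rightarrow> nat" where
  "of_bits 0 \<beta> = 0"
| "of_bits (Suc n) \<beta> = \<beta> 0 + 2 * of_bits n (\<lambda>j. \<beta> (Suc j))"

lemma of_bits_eq_sum: "of_bits n \<beta> = (\<Sum>j<n. 2 ^ j * \<beta> j)"
proof (induction n arbitrary: \<beta>)
  case (Suc n)
  show ?case
    by (simp add: Suc sum.lessThan_Suc_shift sum_distrib_left mult.assoc del: sum.lessThan_Suc)
qed simp

lemma of_bits_cong: "(\<And>j. j < n \<Longrightarrow> \<beta> j = \<beta>' j) \<Longrightarrow> of_bits n \<beta> = of_bits n \<beta>'"
  unfolding of_bits_eq_sum by (rule sum.cong) auto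

lemma qbit_less: "qbit l i < 2"
  by (simp add: qbit_def)

lemma qbit_0: "qbit 0 x = x mod 2"
  by (simp add: qbit_def)

lemma qbit_Suc: "qbit (Suc j) x = qbit j (x div 2)"
  by (simp add: qbit_def div_mult2_eq)

lemma of_bits_less: "(\<And>j. j < n \<Longrightarrow> \<beta> j < 2) \<Longrightarrow> of_bits n \<beta> < 2 ^ n"
proof (induction n arbitrary: \<beta>)
  case (Suc n)
  then have "of_bits n (\<lambda>j. \<beta> (Suc j)) < 2 ^ n" "\<beta> 0 < 2"
    by auto
  then show ?case
    by simp
qed simp

lemma qbit_of_bits: "(\<And>j. j < n \<Longrightarrow> \<beta> j < 2) \<Longrightarrow> j < n \<Longrightarrow> qbit j (of_bits n \<beta>) = \<beta> j"
proof (induction n arbitrary: \<beta> j)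
  case (Suc n)
  have "\<beta> 0 < 2"
    using Suc by auto
  then show ?case
    using Suc.IH[of "\<lambda>j. \<beta> (Suc j)"] Suc.prems by (cases j) (auto simp: qbit_0 qbit_Suc)
qed simp

lemma of_bits_qbit: "i < 2 ^ n \<Longrightarrow> of_bits n (\<lambda>j. qbit j i) = i"
proof (induction n arbitrary: i)
  case (Suc n)
  then have "of_bits n (\<lambda>j. qbit j (i div 2)) = i div 2"
    by auto
  then show ?case
    by (simp add: qbit_Suc qbit_0)
qed simp

lemma qbit_inject:
  "i < 2 ^ n \<Longrightarrow> k < 2 ^ n \<Longrightarrow> (\<And>j. j < n \<Longrightarrow> qbit j i = qbit j k) \<Longrightarrow> i = k"
  by (metis of_bits_qbit of_bits_cong)

lemma local_index_eq_of_bits: "local_index qs i = of_bits (length qs) (\<lambda>m. qbit (qs ! m) i)"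
  by (simp add: local_index_def of_bits_eq_sum)

lemma local_index_less: "local_index qs i < 2 ^ length qs"
  unfolding local_index_eq_of_bits by (rule of_bits_less) (simp add: qbit_less)

lemma qbit_local_index: "m < length qs \<Longrightarrow> qbit m (local_index qs i) = qbit (qs ! m) i"
  unfolding local_index_eq_of_bits by (rule qbit_of_bits) (auto simp: qbit_less)

lemma local_index_single: "local_index [j] i = qbit j i"
  by (simp add: local_index_def)

definition agree_outside :: "nat \<Rightarrow> nat set \<Rightarrow> nat \<Rightarrow> nat \<Rightarrow> bool" where
  "agree_outside n S i k \<longleftrightarrow> (\<forall>l<n. l \<notin> S \<longrightarrow> qbit l i = qbit l k)"

definition position :: "nat list \<Rightarrow> nat \<Rightarrow> nat" where
  "position qs j = (THE m. m < length qs \<and> qs ! m = j)"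

lemma position_nth: "distinct qs \<Longrightarrow> m < length qs \<Longrightarrow> position qs (qs ! m) = m"
  unfolding position_def by (rule the_equality) (auto simp: nth_eq_iff_index_eq)

lemma position_in_set:
  "distinct qs \<Longrightarrow> j \<in> set qs \<Longrightarrow> position qs j < length qs \<and> qs ! position qs j = j"
  by (metis position_nth in_set_conv_nth)

section \<open>Embedding operators on a subset of the qubits\<close>

lemma embed_carrier[simp]: "embed n qs U \<in> carrier_mat (2^n) (2^n)"
  by (simp add: embed_def)

lemma embed_dims[simp]: "dim_row (embed n qs U) = 2^n" "dim_col (embed n qs U) = 2^n"
  by (simp_all add: embed_def)

lemma index_embed:
  "i < 2^n \<Longrightarrow> k < 2^n \<Longrightarrow> embed n qs U $$ (i, k) =
     (if agree_outside n (set qs) i k then U $$ (local_index qs i, local_index qs k) else 0)"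
  by (simp add: embed_def agree_outside_def)

lemma index_mult_mat_sum:
  "A \<in> carrier_mat d d \<Longrightarrow> B \<in> carrier_mat d d \<Longrightarrow> i < d \<Longrightarrow> k < d \<Longrightarrow>
     (A * B) $$ (i, k) = (\<Sum>l\<in>{0..<d}. A $$ (i, l) * B $$ (l, k))"
  by (simp add: scalar_prod_def)

lemma agree_outside_refl[simp]: "agree_outside n S i i"
  by (simp add: agree_outside_def)

lemma agree_outside_trans:
  "agree_outside n S i l \<Longrightarrow> agree_outside n T l k \<Longrightarrow> agree_outside n (S \<union> T) i k"
  by (auto simp: agree_outside_def)

lemma agree_outside_local_index_eq_iff:
  assumes "i < 2^n" "k < 2^n"
  shows "agree_outside n (set qs) i k \<and> local_index qs i = local_index qs k \<longleftrightarrow> i = k"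
proof
  assume eq: "agree_outside n (set qs) i k \<and> local_index qs i = local_index qs k"
  show "i = k"
  proof (rule qbit_inject[OF assms])
    fix j assume "j < n"
    show "qbit j i = qbit j k"
    proof (cases "j \<in> set qs")
      case True
      then obtain m where "m < length qs" "qs ! m = j"
        by (auto simp: in_set_conv_nth)
      then show ?thesis
        using eq qbit_local_index[of m qs] by metis
    qed (use eq \<open>j < n\<close> in \<open>auto simp: agree_outside_def\<close>)
  qed
qed (auto simp: agree_outside_def)

text \<open>Parametrises the summation indices that survive in a product of two embeddings on the
  same qubits.\<close>
definition spliced_index :: "nat \<Rightarrow> nat list \<Rightarrow> nat \<Rightarrow> nat \<Rightarrow> nat" where
  "spliced_index n qs i a = of_bits n (\<lambda>j. if j \<in> set qs then qbit (position qs j) a else qbit j i)"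

lemma qbit_spliced_index:
  "j < n \<Longrightarrow> qbit j (spliced_index n qs i a) = (if j \<in> set qs then qbit (position qs j) a else qbit j i)"
  unfolding spliced_index_def by (rule qbit_of_bits) (auto simp: qbit_less)

lemma spliced_index_less: "spliced_index n qs i a < 2^n"
  unfolding spliced_index_def by (rule of_bits_less) (auto simp: qbit_less)

lemma agree_outside_spliced_index: "agree_outside n (set qs) i (spliced_index n qs i a)"
  by (simp add: agree_outside_def qbit_spliced_index)

lemma local_index_spliced_index:
  assumes "distinct qs" "set qs \<subseteq> {0..<n}" "a < 2 ^ length qs"
  shows "local_index qs (spliced_index n qs i a) = a"
proof -
  have "local_index qs (spliced_index n qs i a) = of_bits (length qs) (\<lambda>m. qbit m a)"
    unfolding local_index_eq_of_bits
  proof (rule of_bits_cong)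
    fix m assume "m < length qs"
    moreover from this have "qs ! m < n"
      using assms(2) nth_mem by fastforce
    ultimately show "qbit (qs ! m) (spliced_index n qs i a) = qbit m a"
      using assms(1) by (simp add: qbit_spliced_index position_nth)
  qed
  then show ?thesis
    using of_bits_qbit[OF assms(3)] by simp
qed

lemma agree_outside_image_spliced_index:
  assumes "distinct qs" "set qs \<subseteq> {0..<n}"
  shows "{l \<in> {0..<2^n}. agree_outside n (set qs) i l} = spliced_index n qs i ` {0..<2 ^ length qs}"
proof (intro equalityI subsetI)
  fix l assume "l \<in> {l \<in> {0..<2^n}. agree_outside n (set qs) i l}"
  then have l: "l < 2^n" "agree_outside n (set qs) i l"
    by auto
  have "agree_outside n (set qs) (spliced_index n qs i (local_index qs l)) l"
    using l(2) by (auto simp: agree_outside_def qbit_spliced_index)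
  moreover have "local_index qs (spliced_index n qs i (local_index qs l)) = local_index qs l"
    using assms by (simp add: local_index_spliced_index local_index_less)
  ultimately have "spliced_index n qs i (local_index qs l) = l"
    using agree_outside_local_index_eq_iff[OF spliced_index_less l(1)] by blast
  then show "l \<in> spliced_index n qs i ` {0..<2 ^ length qs}"
    using local_index_less[of qs l] by force
qed (auto simp: spliced_index_less agree_outside_spliced_index)

lemma embed_mult:
  assumes d: "distinct qs" and s: "set qs \<subseteq> {0..<n}"
    and U: "U \<in> carrier_mat (2 ^ length qs) (2 ^ length qs)"
    and V: "V \<in> carrier_mat (2 ^ length qs) (2 ^ length qs)"
  shows "embed n qs U * embed n qs V = embed n qs (U * V)"
proof (rule eq_matI)
  fix i k assume "i < dim_row (embed n qs (U * V))" "k < dim_col (embed n qs (U * V))"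
  then have i: "i < 2^n" and k: "k < 2^n"
    by auto
  let ?li = "local_index qs"
  let ?term = "\<lambda>l. embed n qs U $$ (i, l) * embed n qs V $$ (l, k)"
  have prod: "(embed n qs U * embed n qs V) $$ (i, k) = (\<Sum>l\<in>{0..<2^n}. ?term l)"
    by (rule index_mult_mat_sum[OF embed_carrier embed_carrier i k])
  show "(embed n qs U * embed n qs V) $$ (i, k) = embed n qs (U * V) $$ (i, k)"
  proof (cases "agree_outside n (set qs) i k")
    case True
    have "(\<Sum>l\<in>{0..<2^n}. ?term l)
        = (\<Sum>l\<in>{l \<in> {0..<2^n}. agree_outside n (set qs) i l}. U $$ (?li i, ?li l) * V $$ (?li l, ?li k))"
      using True by (intro sum.mono_neutral_cong_right) (auto simp: index_embed i k agree_outside_def)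
    also have "\<dots> = (\<Sum>a\<in>{0..<2 ^ length qs}. U $$ (?li i, a) * V $$ (a, ?li k))"
    proof -
      have "inj_on (spliced_index n qs i) {0..<2 ^ length qs}"
        by (rule inj_on_inverseI[where g = ?li]) (simp add: local_index_spliced_index d s)
      then show ?thesis
        unfolding agree_outside_image_spliced_index[OF d s]
        by (simp add: sum.reindex local_index_spliced_index d s)
    qed
    also have "\<dots> = (U * V) $$ (?li i, ?li k)"
      by (rule index_mult_mat_sum[OF U V local_index_less local_index_less, symmetric])
    finally show ?thesis
      unfolding prod using True by (simp add: index_embed i k)
  next
    case False
    have "(\<Sum>l\<in>{0..<2^n}. ?term l) = 0"
      using False agree_outside_trans[of n "set qs" i _ "set qs" k]
      by (intro sum.neutral ballI) (auto simp: index_embed i k)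
    then show ?thesis
      unfolding prod using False by (simp add: index_embed i k)
  qed
qed auto

text \<open>For disjoint qs and rs the only index between i and k takes its qs-bits from k and all
  other bits from i.\<close>
lemma agree_outside_disjoint_midpoint:
  assumes sq: "set qs \<subseteq> {0..<n}" and sr: "set rs \<subseteq> {0..<n}" and disj: "set qs \<inter> set rs = {}"
    and ik: "agree_outside n (set qs \<union> set rs) i k"
  obtains h where "h < 2^n" "agree_outside n (set qs) i h" "agree_outside n (set rs) h k"
    "local_index qs h = local_index qs k" "local_index rs h = local_index rs i"
    "\<And>l. l < 2^n \<Longrightarrow> agree_outside n (set qs) i l \<Longrightarrow> agree_outside n (set rs) l k \<Longrightarrow> l = h"
proof -
  define h where "h = of_bits n (\<lambda>j. if j \<in> set qs then qbit j k else qbit j i)"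
  have h_bits: "qbit j h = (if j \<in> set qs then qbit j k else qbit j i)" if "j < n" for j
    unfolding h_def by (rule qbit_of_bits) (auto simp: qbit_less that)
  have h_less: "h < 2^n"
    unfolding h_def by (rule of_bits_less) (auto simp: qbit_less)
  have unique: "l = h"
    if "l < 2^n" "agree_outside n (set qs) i l" "agree_outside n (set rs) l k" for l
  proof (rule qbit_inject[OF that(1) h_less])
    fix j assume "j < n"
    then show "qbit j l = qbit j h"
      using that h_bits disj by (cases "j \<in> set qs") (auto simp: agree_outside_def)
  qed
  have "agree_outside n (set qs) i h" "agree_outside n (set rs) h k"
    using h_bits ik by (auto simp: agree_outside_def)
  moreover have "local_index qs h = local_index qs k"
    unfolding local_index_eq_of_bits
  proof (rule of_bits_cong)
    fix m assume "m < length qs"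
    then have "qs ! m \<in> set qs"
      by simp
    then show "qbit (qs ! m) h = qbit (qs ! m) k"
      using h_bits sq by auto
  qed
  moreover have "local_index rs h = local_index rs i"
    unfolding local_index_eq_of_bits
  proof (rule of_bits_cong)
    fix m assume "m < length rs"
    then have "rs ! m \<in> set rs"
      by simp
    then have "rs ! m < n" "rs ! m \<notin> set qs"
      using sr disj by auto
    then show "qbit (rs ! m) h = qbit (rs ! m) i"
      by (simp add: h_bits)
  qed
  ultimately show thesis
    using unique by (intro that[OF h_less]) auto
qed

lemma embed_mult_disjoint:
  assumes sq: "set qs \<subseteq> {0..<n}" and sr: "set rs \<subseteq> {0..<n}" and disj: "set qs \<inter> set rs = {}"
  shows "embed n qs X * embed n rs Y = mat (2^n) (2^n) (\<lambda>(i, k).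
           if agree_outside n (set qs \<union> set rs) i k
           then X $$ (local_index qs i, local_index qs k) * Y $$ (local_index rs i, local_index rs k)
           else 0)"
    (is "_ = mat _ _ ?rhs")
proof (rule eq_matI)
  fix i k assume "i < dim_row (mat (2^n) (2^n) ?rhs)" "k < dim_col (mat (2^n) (2^n) ?rhs)"
  then have i: "i < 2^n" and k: "k < 2^n"
    by auto
  let ?term = "\<lambda>l. embed n qs X $$ (i, l) * embed n rs Y $$ (l, k)"
  have prod: "(embed n qs X * embed n rs Y) $$ (i, k) = (\<Sum>l\<in>{0..<2^n}. ?term l)"
    by (rule index_mult_mat_sum[OF embed_carrier embed_carrier i k])
  have nonzero: "agree_outside n (set qs) i l \<and> agree_outside n (set rs) l k"
    if "l < 2^n" "?term l \<noteq> 0" for l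
    using that i k by (auto simp: index_embed split: if_splits)
  show "(embed n qs X * embed n rs Y) $$ (i, k) = mat (2^n) (2^n) ?rhs $$ (i, k)"
  proof (cases "agree_outside n (set qs \<union> set rs) i k")
    case True
    obtain h where h: "h < 2^n" "agree_outside n (set qs) i h" "agree_outside n (set rs) h k"
      "local_index qs h = local_index qs k" "local_index rs h = local_index rs i"
      "\<And>l. l < 2^n \<Longrightarrow> agree_outside n (set qs) i l \<Longrightarrow> agree_outside n (set rs) l k \<Longrightarrow> l = h"
      using agree_outside_disjoint_midpoint[OF sq sr disj True] by blast
    have "(embed n qs X * embed n rs Y) $$ (i, k) = (\<Sum>l\<in>{h}. ?term l)"
      unfolding prod
    proof (rule sum.mono_neutral_right)
      show "\<forall>l\<in>{0..<2^n} - {h}. ?term l = 0"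
      proof
        fix l assume "l \<in> {0..<2^n} - {h}"
        then show "?term l = 0"
          using nonzero[of l] h(6)[of l] by (metis DiffE atLeastLessThan_iff singletonI)
      qed
    qed (use h(1) in auto)
    also have "\<dots> = ?rhs (i, k)"
      using h(1-5) True by (simp add: index_embed i k)
    finally show ?thesis
      using i k by simp
  next
    case False
    have "?term l = 0" if "l \<in> {0..<2^n}" for l
      using nonzero[of l] agree_outside_trans[of n "set qs" i l "set rs" k] False that
      by (meson atLeastLessThan_iff)
    then have "(embed n qs X * embed n rs Y) $$ (i, k) = 0"
      unfolding prod by (rule sum.neutral[rule_format])
    then show ?thesis
      using False i k by simp
  qed
qed auto

lemma embed_commute:
  assumes "set qs \<subseteq> {0..<n}" "set rs \<subseteq> {0..<n}" "set qs \<inter> set rs = {}"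
  shows "embed n qs X * embed n rs Y = embed n rs Y * embed n qs X"
proof -
  have disj: "set rs \<inter> set qs = {}"
    using assms(3) by blast
  have union: "set rs \<union> set qs = set qs \<union> set rs"
    by blast
  show ?thesis
    unfolding embed_mult_disjoint[OF assms] embed_mult_disjoint[OF assms(2,1) disj] union
    by (rule eq_matI) (simp_all add: mult.commute)
qed

lemma embed_embed_single:
  assumes d: "distinct qs" and s: "set qs \<subseteq> {0..<n}" and m: "m < length qs"
  shows "embed n qs (embed (length qs) [m] \<sigma>) = embed n [qs ! m] \<sigma>"
proof (rule eq_matI)
  fix i k assume "i < dim_row (embed n [qs ! m] \<sigma>)" "k < dim_col (embed n [qs ! m] \<sigma>)"
  then have i: "i < 2^n" and k: "k < 2^n"
    by auto
  have qs_nth: "qs ! m' < n" "qs ! m' = qs ! m \<longleftrightarrow> m' = m" if "m' < length qs" for m'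
    using that m d s nth_mem nth_eq_iff_index_eq by fastforce+
  have "agree_outside n (set qs) i k \<and> agree_outside (length qs) {m} (local_index qs i) (local_index qs k)
      \<longleftrightarrow> agree_outside n {qs ! m} i k" (is "?lhs \<longleftrightarrow> ?rhs")
  proof
    assume ?lhs
    then show ?rhs
      unfolding agree_outside_def using qs_nth
      by (metis in_set_conv_nth qbit_local_index singletonD singletonI)
  next
    assume ?rhs
    then show ?lhs
      unfolding agree_outside_def using qs_nth m
      by (auto simp: qbit_local_index)
  qed
  then show "embed n qs (embed (length qs) [m] \<sigma>) $$ (i, k) = embed n [qs ! m] \<sigma> $$ (i, k)"
    using m by (auto simp: index_embed i k local_index_less local_index_single qbit_local_index)
qed auto

lemma embed_one:
  assumes "set qs \<subseteq> {0..<n}"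
  shows "embed n qs (1\<^sub>m (2 ^ length qs)) = 1\<^sub>m (2^n)"
proof (rule eq_matI)
  fix i k assume "i < dim_row (1\<^sub>m (2^n) :: complex mat)" "k < dim_col (1\<^sub>m (2^n) :: complex mat)"
  then have i: "i < 2^n" and k: "k < 2^n"
    by auto
  then show "embed n qs (1\<^sub>m (2 ^ length qs)) $$ (i, k) = 1\<^sub>m (2^n) $$ (i, k)"
    using agree_outside_local_index_eq_iff[OF i k, of qs]
    by (auto simp: index_embed local_index_less)
qed auto

lemma embed_smult:
  assumes "X \<in> carrier_mat (2 ^ length qs) (2 ^ length qs)"
  shows "embed n qs (c \<cdot>\<^sub>m X) = c \<cdot>\<^sub>m embed n qs X"
  by (rule eq_matI) (use assms in \<open>auto simp: index_embed local_index_less\<close>)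

lemma prod_mats_Nil[simp]: "prod_mats d [] = 1\<^sub>m d"
  by (simp add: prod_mats_def)

lemma prod_mats_Cons[simp]: "prod_mats d (M # Ms) = M * prod_mats d Ms"
  by (simp add: prod_mats_def)

lemma prod_mats_carrier: "(\<forall>M\<in>set Ms. M \<in> carrier_mat d d) \<Longrightarrow> prod_mats d Ms \<in> carrier_mat d d"
  by (induction Ms) auto

lemma prod_mats_append:
  "(\<forall>M\<in>set (xs @ ys). M \<in> carrier_mat d d) \<Longrightarrow> prod_mats d (xs @ ys) = prod_mats d xs * prod_mats d ys"
proof (induction xs)
  case Nil
  then have "prod_mats d ys \<in> carrier_mat d d" by (intro prod_mats_carrier) auto
  then show ?case by simp
next
  case (Cons M xs)
  have c: "M \<in> carrier_mat d d" "prod_mats d xs \<in> carrier_mat d d" "prod_mats d ys \<in> carrier_mat d d"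
    using Cons.prems by (auto intro!: prod_mats_carrier)
  have "prod_mats d ((M # xs) @ ys) = M * (prod_mats d xs * prod_mats d ys)" using Cons by simp
  also have "\<dots> = (M * prod_mats d xs) * prod_mats d ys" using assoc_mult_mat[OF c] by simp
  finally show ?case by simp
qed

lemma prod_mats_commute:
  assumes X: "X \<in> carrier_mat d d" and Ms: "\<forall>M\<in>set Ms. M \<in> carrier_mat d d \<and> X * M = M * X"
  shows "X * prod_mats d Ms = prod_mats d Ms * X"
  using Ms
proof (induction Ms)
  case Nil then show ?case using X by simp
next
  case (Cons M Ms)
  have c: "M \<in> carrier_mat d d" "prod_mats d Ms \<in> carrier_mat d d" and xm: "X * M = M * X"
    using Cons.prems by (auto intro!: prod_mats_carrier)
  have ih: "X * prod_mats d Ms = prod_mats d Ms * X" using Cons by auto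
  have "X * (M * prod_mats d Ms) = (X * M) * prod_mats d Ms" using assoc_mult_mat[OF X c] by simp
  also have "\<dots> = M * (X * prod_mats d Ms)"
    unfolding xm using assoc_mult_mat[OF c(1) X c(2)] by simp
  also have "\<dots> = (M * prod_mats d Ms) * X" unfolding ih using assoc_mult_mat[OF c X] by simp
  finally show ?case by simp
qed

definition tensor_on :: "nat \<Rightarrow> nat list \<Rightarrow> (nat \<Rightarrow> complex mat) \<Rightarrow> complex mat" where
  "tensor_on n js A = prod_mats (2^n) (map (\<lambda>j. embed n [j] (A j)) js)"

abbreviation tensor_all :: "nat \<Rightarrow> (nat \<Rightarrow> complex mat) \<Rightarrow> complex mat" where
  "tensor_all n A \<equiv> tensor_on n [0..<n] A"

lemma tensor_on_carrier[simp]: "tensor_on n js A \<in> carrier_mat (2^n) (2^n)"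
  unfolding tensor_on_def by (rule prod_mats_carrier) auto

lemma tensor_on_dims[simp]: "dim_row (tensor_on n js A) = 2^n" "dim_col (tensor_on n js A) = 2^n"
  by (rule carrier_matD[OF tensor_on_carrier])+

lemma tensor_on_Nil[simp]: "tensor_on n [] A = 1\<^sub>m (2^n)"
  by (simp add: tensor_on_def)

lemma tensor_on_Cons: "tensor_on n (j # js) A = embed n [j] (A j) * tensor_on n js A"
  by (simp add: tensor_on_def)

lemma tensor_on_append: "tensor_on n (xs @ ys) A = tensor_on n xs A * tensor_on n ys A"
  unfolding tensor_on_def by (subst map_append, rule prod_mats_append) auto

lemma tensor_on_cong: "(\<And>j. j \<in> set js \<Longrightarrow> A j = B j) \<Longrightarrow> tensor_on n js A = tensor_on n js B"
  unfolding tensor_on_def by (metis (mono_tags, lifting) map_eq_conv)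

lemma embed_tensor_on_commute:
  assumes "set qs \<subseteq> {0..<n}" "set js \<subseteq> {0..<n}" "set qs \<inter> set js = {}"
  shows "embed n qs U * tensor_on n js A = tensor_on n js A * embed n qs U"
  unfolding tensor_on_def by (rule prod_mats_commute) (use assms in \<open>auto intro!: embed_commute\<close>)

lemma tensor_on_perm:
  assumes "distinct js" "distinct js'" "set js = set js'" "set js \<subseteq> {0..<n}"
  shows "tensor_on n js A = tensor_on n js' A"
  using assms
proof (induction js arbitrary: js')
  case Nil
  then show ?case
    by simp
next
  case (Cons j js)
  then have "j \<in> set js'" by auto
  then obtain xs ys where js': "js' = xs @ j # ys" by (meson split_list)
  have j: "j < n" "j \<notin> set xs" "set xs \<subseteq> {0..<n}" using Cons.prems js' by auto
  have "tensor_on n js' A = tensor_on n xs A * (embed n [j] (A j) * tensor_on n ys A)"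
    by (simp add: js' tensor_on_append tensor_on_Cons)
  also have "\<dots> = (tensor_on n xs A * embed n [j] (A j)) * tensor_on n ys A"
    by (simp add: assoc_mult_mat_dims)
  also have "\<dots> = (embed n [j] (A j) * tensor_on n xs A) * tensor_on n ys A"
    using embed_tensor_on_commute[of "[j]"] j by simp
  also have "\<dots> = embed n [j] (A j) * tensor_on n (xs @ ys) A"
    by (simp add: tensor_on_append assoc_mult_mat_dims)
  also have "tensor_on n (xs @ ys) A = tensor_on n js A"
    using Cons.prems js' by (intro Cons.IH[symmetric]) auto
  finally show ?case by (simp add: tensor_on_Cons)
qed

lemma tensor_on_mult:
  assumes "distinct js" "set js \<subseteq> {0..<n}" "\<forall>j\<in>set js. A j \<in> carrier_mat 2 2 \<and> B j \<in> carrier_mat 2 2"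
  shows "tensor_on n js A * tensor_on n js B = tensor_on n js (\<lambda>j. A j * B j)"
  using assms
proof (induction js)
  case Nil
  then show ?case
    by simp
next
  case (Cons j js)
  let ?a = "embed n [j] (A j)" and ?b = "embed n [j] (B j)"
  have j: "j < n" "j \<notin> set js" "set js \<subseteq> {0..<n}" using Cons.prems by auto
  have cm: "?b * tensor_on n js A = tensor_on n js A * ?b"
    using embed_tensor_on_commute[of "[j]"] j by simp
  have "tensor_on n (j # js) A * tensor_on n (j # js) B = ?a * (tensor_on n js A * ?b) * tensor_on n js B"
    by (simp add: tensor_on_Cons assoc_mult_mat_dims)
  also have "\<dots> = ?a * ?b * (tensor_on n js A * tensor_on n js B)"
    by (simp add: cm[symmetric] assoc_mult_mat_dims)
  also have "?a * ?b = embed n [j] (A j * B j)" using Cons.prems by (intro embed_mult) auto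
  also have "tensor_on n js A * tensor_on n js B = tensor_on n js (\<lambda>j. A j * B j)"
    using Cons by auto
  finally show ?case by (simp add: tensor_on_Cons)
qed

lemma tensor_on_smult:
  assumes "\<forall>j\<in>set js. A j \<in> carrier_mat 2 2"
  shows "tensor_on n js (\<lambda>j. c j \<cdot>\<^sub>m A j) = prod_list (map c js) \<cdot>\<^sub>m tensor_on n js A"
  using assms
proof (induction js)
  case Nil
  then show ?case
    by simp
next
  case (Cons j js)
  have "embed n [j] (c j \<cdot>\<^sub>m A j) = c j \<cdot>\<^sub>m embed n [j] (A j)"
    using Cons.prems by (intro embed_smult) auto
  then show ?case using Cons by (simp add: tensor_on_Cons smult_mult_smult_mat[of _ "2^n" "2^n" _ "2^n"])
qed

lemma tensor_on_one:
  assumes "set js \<subseteq> {0..<n}" "\<forall>j\<in>set js. A j = 1\<^sub>m 2"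
  shows "tensor_on n js A = 1\<^sub>m (2^n)"
  using assms
proof (induction js)
  case Nil
  then show ?case
    by simp
next
  case (Cons j js)
  have "embed n [j] (1\<^sub>m (2 ^ length [j])) = 1\<^sub>m (2^n)"
    using Cons.prems by (intro embed_one) auto
  then show ?case using Cons by (simp add: tensor_on_Cons)
qed

lemma embed_prod_mats:
  assumes d: "distinct qs" and s: "set qs \<subseteq> {0..<n}"
    and Ms: "\<forall>M\<in>set Ms. M \<in> carrier_mat (2 ^ length qs) (2 ^ length qs)"
  shows "embed n qs (prod_mats (2 ^ length qs) Ms) = prod_mats (2^n) (map (embed n qs) Ms)"
  using Ms
proof (induction Ms)
  case Nil then show ?case using embed_one[OF s] by simp
next
  case (Cons M Ms)
  have "prod_mats (2 ^ length qs) Ms \<in> carrier_mat (2 ^ length qs) (2 ^ length qs)"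
    using Cons.prems by (intro prod_mats_carrier) auto
  then have "embed n qs (M * prod_mats (2 ^ length qs) Ms) = embed n qs M * embed n qs (prod_mats (2 ^ length qs) Ms)"
    using Cons.prems by (intro embed_mult[OF d s, symmetric]) auto
  then show ?case using Cons by simp
qed

lemma tensor_on_eq_embed:
  assumes d: "distinct qs" and s: "set qs \<subseteq> {0..<n}"
  shows "tensor_on n qs A = embed n qs (tensor_on (length qs) [0..<length qs] (\<lambda>m. A (qs ! m)))"
proof -
  let ?k = "length qs"
  have "embed n qs (tensor_on ?k [0..<?k] (\<lambda>m. A (qs ! m))) =
     prod_mats (2^n) (map (embed n qs) (map (\<lambda>m. embed ?k [m] (A (qs ! m))) [0..<?k]))"
    unfolding tensor_on_def by (rule embed_prod_mats[OF d s]) auto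
  also have "map (embed n qs) (map (\<lambda>m. embed ?k [m] (A (qs ! m))) [0..<?k]) =
       map (\<lambda>m. embed n [qs ! m] (A (qs ! m))) [0..<?k]"
    using embed_embed_single[OF d s] by simp
  also have "\<dots> = map (\<lambda>j. embed n [j] (A j)) (map (\<lambda>m. qs ! m) [0..<?k])"
    by simp
  also have "map (\<lambda>m. qs ! m) [0..<?k] = qs" by (rule map_nth)
  finally show ?thesis by (simp add: tensor_on_def)
qed

lemma embed_single_propto_id:
  assumes "j < n"
  shows "embed n [j] (c \<cdot>\<^sub>m 1\<^sub>m 2) = c \<cdot>\<^sub>m 1\<^sub>m (2^n)"
proof -
  have "embed n [j] (c \<cdot>\<^sub>m 1\<^sub>m (2 ^ length [j])) = c \<cdot>\<^sub>m embed n [j] (1\<^sub>m (2 ^ length [j]))"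
    by (rule embed_smult) simp
  also have "embed n [j] (1\<^sub>m (2 ^ length [j])) = 1\<^sub>m (2^n)"
    by (rule embed_one) (use assms in simp)
  finally show ?thesis by simp
qed

lemma tensor_on_propto_id:
  assumes "set js \<subseteq> {0..<n}" "\<forall>j\<in>set js. propto_id (A j)"
  shows "\<exists>c. tensor_on n js A = c \<cdot>\<^sub>m 1\<^sub>m (2^n)"
  using assms
proof (induction js)
  case Nil
  show ?case
    by (rule exI[of _ 1]) simp
next
  case (Cons j js)
  obtain c where c: "tensor_on n js A = c \<cdot>\<^sub>m 1\<^sub>m (2^n)"
    using Cons by auto
  obtain a where a: "A j = a \<cdot>\<^sub>m 1\<^sub>m 2"
    using Cons.prems by (auto simp: propto_id_def)
  have "tensor_on n (j # js) A = (a * c) \<cdot>\<^sub>m 1\<^sub>m (2^n)"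
    using Cons.prems smult_mult_smult_mat[OF one_carrier_mat one_carrier_mat, of a "2^n" c]
    by (simp add: tensor_on_Cons a c embed_single_propto_id)
  then show ?case
    by blast
qed

section \<open>Pushing Paulis through Clifford circuits\<close>

lemma tensor_on_in_pauli_group:
  assumes B: "\<forall>m<k. B m \<in> pauli1"
  shows "tensor_on k [0..<k] B \<in> pauli_group k"
proof -
  have "\<forall>m\<in>{..<k}. \<exists>c \<sigma>. c \<in> phases \<and> \<sigma> \<in> pauli_basis \<and> B m = c \<cdot>\<^sub>m \<sigma>"
    using B unfolding pauli1_def by blast
  then obtain c \<sigma> where c\<sigma>: "\<forall>m\<in>{..<k}. c m \<in> phases \<and> \<sigma> m \<in> pauli_basis \<and> B m = c m \<cdot>\<^sub>m \<sigma> m"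
    by metis
  have "tensor_on k [0..<k] B = tensor_on k [0..<k] (\<lambda>m. c m \<cdot>\<^sub>m \<sigma> m)"
    by (rule tensor_on_cong) (use c\<sigma> in auto)
  also have "\<dots> = prod_list (map c [0..<k]) \<cdot>\<^sub>m tensor_on k [0..<k] \<sigma>"
    by (rule tensor_on_smult) (use c\<sigma> pauli_basis_carrier in auto)
  also have "tensor_on k [0..<k] \<sigma> = tensor_on k [0..<k] (\<lambda>m. map \<sigma> [0..<k] ! m)"
    by (rule tensor_on_cong) simp
  finally have "tensor_on k [0..<k] B = prod_list (map c [0..<k]) \<cdot>\<^sub>m tensor_on k [0..<k] (\<lambda>m. map \<sigma> [0..<k] ! m)" .
  moreover have "prod_list (map c [0..<k]) \<in> phases"
    by (rule prod_list_phases) (use c\<sigma> in auto)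
  moreover have "length (map \<sigma> [0..<k]) = k" "set (map \<sigma> [0..<k]) \<subseteq> pauli_basis"
    using c\<sigma> by auto
  ultimately show ?thesis
    unfolding pauli_group_def tensor_on_def by blast
qed

lemma pauli_groupE:
  assumes "P \<in> pauli_group k" "k \<ge> 1"
  obtains B where "\<forall>m<k. B m \<in> pauli1" "P = tensor_on k [0..<k] B"
proof -
  from assms(1) obtain c \<sigma>s where c: "c \<in> phases" and \<sigma>s: "length \<sigma>s = k" "set \<sigma>s \<subseteq> pauli_basis"
    and P: "P = c \<cdot>\<^sub>m tensor_on k [0..<k] (\<lambda>m. \<sigma>s ! m)"
    unfolding pauli_group_def tensor_on_def by blast
  \<comment> \<open>the global phase is absorbed into the first tensor factor\<close>
  define coef where "coef m = (if m = 0 then c else 1)" for m :: nat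
  have "[0..<k] = 0 # [1..<k]"
    using assms(2) upt_conv_Cons by auto
  moreover have "prod_list (map coef xs) = 1" if "0 \<notin> set xs" for xs
    using that by (induction xs) (auto simp: coef_def)
  ultimately have phase: "prod_list (map coef [0..<k]) = c"
    by (simp add: coef_def)
  have "\<forall>m\<in>set [0..<k]. \<sigma>s ! m \<in> carrier_mat 2 2"
    using \<sigma>s pauli_basis_carrier nth_mem by fastforce
  then have "P = tensor_on k [0..<k] (\<lambda>m. coef m \<cdot>\<^sub>m \<sigma>s ! m)"
    unfolding P phase[symmetric] by (rule tensor_on_smult[symmetric])
  moreover have "coef m \<cdot>\<^sub>m \<sigma>s ! m \<in> pauli1" if "m < k" for m
  proof -
    have "coef m \<in> phases" "\<sigma>s ! m \<in> pauli_basis"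
      using c \<sigma>s that by (auto simp: coef_def one_in_phases)
    then show ?thesis
      by (auto simp: pauli1_def)
  qed
  ultimately show ?thesis
    using that[of "\<lambda>m. coef m \<cdot>\<^sub>m \<sigma>s ! m"] by blast
qed

lemma clifford_conj_pauli_string:
  assumes cl: "clifford k U" and k: "k \<ge> 1" and A: "\<forall>m<k. A m \<in> pauli1"
  shows "\<exists>B. (\<forall>m<k. B m \<in> pauli1) \<and> U * tensor_on k [0..<k] A = tensor_on k [0..<k] B * U
           \<and> ((\<forall>m<k. propto_id (A m)) \<longrightarrow> B = A)"
proof -
  let ?T = "tensor_on k [0..<k] A"
  have U: "U \<in> carrier_mat (2^k) (2^k)" and UU: "U * adj U = 1\<^sub>m (2^k)"
    using cl by (auto simp: clifford_def unitary_mat_def)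
  show ?thesis
  proof (cases "\<forall>m<k. propto_id (A m)")
    case True
    then obtain c where "?T = c \<cdot>\<^sub>m 1\<^sub>m (2^k)"
      using tensor_on_propto_id[of "[0..<k]" k A] by auto
    then show ?thesis
      using A smult_one_mat_commute[OF U] by auto
  next
    case False
    have adjU: "adj U \<in> carrier_mat (2^k) (2^k)"
      unfolding adj_def carrier_matD[OF U] by (rule mat_carrier)
    have "U * ?T * adj U \<in> pauli_group k"
      using cl tensor_on_in_pauli_group[OF A] by (auto simp: clifford_def)
    then obtain B where B: "\<forall>m<k. B m \<in> pauli1" "U * ?T * adj U = tensor_on k [0..<k] B"
      using k by (elim pauli_groupE) auto
    have "U * ?T = U * ?T * (adj U * U)"
      using U by (simp add: mat_mult_left_right_inverse[OF U adjU UU])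
    also have "\<dots> = tensor_on k [0..<k] B * U"
      using U adjU by (simp flip: B(2) add: assoc_mult_mat_dims)
    finally show ?thesis
      using B(1) False by blast
  qed
qed

lemma embed_conj_tensor_all:
  assumes d: "distinct qs" and s: "set qs \<subseteq> {0..<n}"
    and U: "U \<in> carrier_mat (2 ^ length qs) (2 ^ length qs)"
    and conj: "U * tensor_on (length qs) [0..<length qs] (\<lambda>m. A (qs ! m))
             = tensor_on (length qs) [0..<length qs] (\<lambda>m. B (qs ! m)) * U"
    and outside: "\<forall>j. j \<notin> set qs \<longrightarrow> B j = A j"
  shows "embed n qs U * tensor_all n A = tensor_all n B * embed n qs U"
proof -
  define rest where "rest = filter (\<lambda>j. j \<notin> set qs) [0..<n]"
  have rest: "set rest \<subseteq> {0..<n}" "set qs \<inter> set rest = {}"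
    by (auto simp: rest_def)
  have split: "tensor_all n X = tensor_on n qs X * tensor_on n rest X" for X
  proof -
    have "tensor_all n X = tensor_on n (qs @ rest) X"
      by (rule tensor_on_perm) (use d s in \<open>auto simp: rest_def\<close>)
    then show ?thesis
      by (simp add: tensor_on_append)
  qed
  have "embed n qs U * tensor_on n qs A = embed n qs (U * tensor_on (length qs) [0..<length qs] (\<lambda>m. A (qs ! m)))"
    using U by (simp add: tensor_on_eq_embed[OF d s] embed_mult[OF d s])
  also have "\<dots> = tensor_on n qs B * embed n qs U"
    using U by (simp add: conj tensor_on_eq_embed[OF d s] embed_mult[OF d s])
  finally have local: "embed n qs U * tensor_on n qs A = tensor_on n qs B * embed n qs U" .
  have "tensor_on n rest A = tensor_on n rest B"
    by (rule tensor_on_cong) (use outside in \<open>auto simp: rest_def\<close>)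
  then show ?thesis
    unfolding split using local embed_tensor_on_commute[OF s rest]
    by (simp flip: assoc_mult_mat_dims) (simp add: assoc_mult_mat_dims)
qed

definition gate_link :: "layer \<Rightarrow> nat \<Rightarrow> nat \<Rightarrow> bool" where
  "gate_link L a b \<longleftrightarrow> a = b \<or> (\<exists>g\<in>set L. a \<in> set (fst g) \<and> b \<in> set (fst g))"

lemma gate_conj_pauli:
  assumes "valid_gate_12 n (qs, U)" and A: "\<forall>j<n. A j \<in> pauli1"
  shows "\<exists>B. (\<forall>j<n. B j \<in> pauli1)
           \<and> embed n qs U * tensor_all n A = tensor_all n B * embed n qs U
           \<and> (\<forall>j<n. \<not> propto_id (B j) \<longrightarrow> (\<exists>j'<n. \<not> propto_id (A j') \<and> gate_link [(qs, U)] j' j))"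
proof -
  define k where "k = length qs"
  have d: "distinct qs" and s: "set qs \<subseteq> {0..<n}" and k: "k \<ge> 1" and cl: "clifford k U"
    using assms(1) by (auto simp: valid_gate_12_def k_def)
  have U: "U \<in> carrier_mat (2^k) (2^k)"
    using cl by (simp add: clifford_def unitary_mat_def)
  let ?A = "\<lambda>m. A (qs ! m)"
  have "qs ! m < n" if "m < k" for m
    using s nth_mem[OF that[unfolded k_def]] by auto
  then have A_loc: "\<forall>m<k. ?A m \<in> pauli1"
    using A by blast
  obtain Bl where Bl: "\<forall>m<k. Bl m \<in> pauli1"
      "U * tensor_on k [0..<k] ?A = tensor_on k [0..<k] Bl * U"
      "(\<forall>m<k. propto_id (?A m)) \<longrightarrow> Bl = ?A"
    using clifford_conj_pauli_string[OF cl k A_loc] by (elim exE conjE) (rule that)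
  define B where "B j = (if j \<in> set qs then Bl (position qs j) else A j)" for j
  have B_nth: "B (qs ! m) = Bl m" if "m < k" for m
    using that d by (simp add: B_def position_nth k_def)
  have "U * tensor_on k [0..<k] ?A = tensor_on k [0..<k] (\<lambda>m. B (qs ! m)) * U"
    unfolding Bl(2) by (metis B_nth atLeastLessThan_iff set_upt tensor_on_cong)
  then have "embed n qs U * tensor_all n A = tensor_all n B * embed n qs U"
    using U by (intro embed_conj_tensor_all[OF d s]) (auto simp: B_def k_def)
  moreover have "\<forall>j<n. B j \<in> pauli1"
    using A Bl(1) position_in_set[OF d] by (auto simp: B_def k_def)
  moreover have "\<exists>j'<n. \<not> propto_id (A j') \<and> gate_link [(qs, U)] j' j"
    if j: "j < n" "\<not> propto_id (B j)" for j
  proof (cases "j \<in> set qs \<and> \<not> (\<forall>j\<in>set qs. propto_id (A j))")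
    case True
    then obtain j' where j': "j' \<in> set qs" "\<not> propto_id (A j')"
      by blast
    then have "j' < n" "gate_link [(qs, U)] j' j"
      using True s by (auto simp: gate_link_def)
    then show ?thesis
      using j'(2) by blast
  next
    case False
    moreover have "\<forall>m<k. propto_id (?A m)" if "\<forall>j\<in>set qs. propto_id (A j)"
      using that by (simp add: k_def)
    ultimately have "B j = A j"
      using Bl(3) position_in_set[OF d] by (auto simp: B_def k_def)
    then show ?thesis
      using j by (auto simp: gate_link_def)
  qed
  ultimately show ?thesis
    by blast
qed

fun cone_reach :: "circuit \<Rightarrow> nat \<Rightarrow> nat \<Rightarrow> bool" where
  "cone_reach [] a b = (a = b)"
| "cone_reach (L # Ls) a b = (\<exists>c. gate_link L a c \<and> cone_reach Ls c b)"

fun circuit_op :: "nat \<Rightarrow> circuit \<Rightarrow> complex mat" where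
  "circuit_op n [] = 1\<^sub>m (2^n)"
| "circuit_op n (L # Ls) = circuit_op n Ls * layer_op n L"

lemma layer_op_carrier[simp]: "layer_op n L \<in> carrier_mat (2^n) (2^n)"
  unfolding layer_op_def by (rule prod_mats_carrier) auto

lemma layer_op_dims[simp]: "dim_row (layer_op n L) = 2^n" "dim_col (layer_op n L) = 2^n"
  by (rule carrier_matD[OF layer_op_carrier])+

lemma circuit_op_carrier[simp]: "circuit_op n Ls \<in> carrier_mat (2^n) (2^n)"
  by (induction Ls) auto

lemma circuit_op_dims[simp]: "dim_row (circuit_op n Ls) = 2^n" "dim_col (circuit_op n Ls) = 2^n"
  by (rule carrier_matD[OF circuit_op_carrier])+

lemma layer_op_Nil: "layer_op n [] = 1\<^sub>m (2^n)"
  by (simp add: layer_op_def)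

lemma layer_op_Cons: "layer_op n ((qs, U) # L) = embed n qs U * layer_op n L"
  by (simp add: layer_op_def)

lemma valid_layer_Cons:
  assumes "valid_layer n (g # L)"
  shows "valid_layer n L" "valid_gate_12 n g" "\<forall>g'\<in>set L. set (fst g) \<inter> set (fst g') = {}"
proof -
  show "valid_layer n L" unfolding valid_layer_def
  proof (intro conjI allI impI ballI)
    fix g' assume "g' \<in> set L" then show "valid_gate_12 n g'"
      using assms by (auto simp: valid_layer_def)
  next
    fix a b assume "a < length L" "b < length L" "a \<noteq> b"
    then show "set (fst (L ! a)) \<inter> set (fst (L ! b)) = {}"
      using assms unfolding valid_layer_def
      by (metis Suc_less_eq length_Cons nat.inject nth_Cons_Suc)
  qed
  show "valid_gate_12 n g" using assms by (auto simp: valid_layer_def)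
  show "\<forall>g'\<in>set L. set (fst g) \<inter> set (fst g') = {}"
  proof
    fix g' assume "g' \<in> set L"
    then obtain i where i: "i < length L" "L ! i = g'" by (auto simp: in_set_conv_nth)
    then show "set (fst g) \<inter> set (fst g') = {}"
      using assms unfolding valid_layer_def
      by (metis Suc_less_eq length_Cons nat.distinct(1) nth_Cons_0 nth_Cons_Suc zero_less_Suc)
  qed
qed

lemma gate_link_Cons:
  assumes "gate_link [g] b c" "gate_link L a b" "\<forall>g'\<in>set L. set (fst g) \<inter> set (fst g') = {}"
  shows "gate_link (g # L) a c"
  using assms unfolding gate_link_def by (auto simp: disjoint_iff)

lemma layer_conj_pauli:
  assumes "valid_layer n L" "\<forall>j<n. A j \<in> pauli1"
  shows "\<exists>B. (\<forall>j<n. B j \<in> pauli1) \<and> layer_op n L * tensor_all n A = tensor_all n B * layer_op n L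
           \<and> (\<forall>j<n. \<not> propto_id (B j) \<longrightarrow> (\<exists>j'<n. \<not> propto_id (A j') \<and> gate_link L j' j))"
  using assms
proof (induction L arbitrary: A)
  case Nil
  show ?case
    by (rule exI[of _ A]) (use Nil in \<open>auto simp: layer_op_Nil gate_link_def\<close>)
next
  case (Cons g L)
  obtain qs U where g: "g = (qs, U)"
    by (cases g)
  have valid: "valid_layer n L" and gate: "valid_gate_12 n (qs, U)"
    and disj: "\<forall>g'\<in>set L. set (fst g) \<inter> set (fst g') = {}"
    using valid_layer_Cons[OF Cons.prems(1)] g by auto
  obtain B1 where B1: "\<forall>j<n. B1 j \<in> pauli1" "layer_op n L * tensor_all n A = tensor_all n B1 * layer_op n L"
    "\<forall>j<n. \<not> propto_id (B1 j) \<longrightarrow> (\<exists>j'<n. \<not> propto_id (A j') \<and> gate_link L j' j)"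
    using Cons.IH[OF valid Cons.prems(2)] by blast
  obtain B2 where B2: "\<forall>j<n. B2 j \<in> pauli1" "embed n qs U * tensor_all n B1 = tensor_all n B2 * embed n qs U"
    "\<forall>j<n. \<not> propto_id (B2 j) \<longrightarrow> (\<exists>j'<n. \<not> propto_id (B1 j') \<and> gate_link [g] j' j)"
    using gate_conj_pauli[OF gate B1(1)] g by blast
  have "layer_op n (g # L) * tensor_all n A = embed n qs U * (layer_op n L * tensor_all n A)"
    by (simp add: g layer_op_Cons assoc_mult_mat_dims)
  also have "\<dots> = (embed n qs U * tensor_all n B1) * layer_op n L"
    unfolding B1(2) by (simp add: assoc_mult_mat_dims)
  also have "\<dots> = tensor_all n B2 * layer_op n (g # L)"
    unfolding B2(2) by (simp add: g layer_op_Cons assoc_mult_mat_dims)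
  finally have "layer_op n (g # L) * tensor_all n A = tensor_all n B2 * layer_op n (g # L)" .
  moreover have "\<exists>j'<n. \<not> propto_id (A j') \<and> gate_link (g # L) j' j"
    if j: "j < n" "\<not> propto_id (B2 j)" for j
  proof -
    obtain j'' where j'': "j'' < n" "\<not> propto_id (B1 j'')" "gate_link [g] j'' j"
      using B2(3) j by blast
    then obtain j' where "j' < n" "\<not> propto_id (A j')" "gate_link L j' j''"
      using B1(3) by blast
    then show ?thesis
      using gate_link_Cons[OF j''(3) _ disj] by blast
  qed
  ultimately show ?case
    using B2(1) by blast
qed

lemma circuit_conj_pauli:
  assumes "\<forall>L\<in>set Ls. valid_layer n L" "\<forall>j<n. A j \<in> pauli1"
  shows "\<exists>B. (\<forall>j<n. B j \<in> pauli1) \<and> circuit_op n Ls * tensor_all n A = tensor_all n B * circuit_op n Ls \<and>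
      (\<forall>j<n. \<not> propto_id (B j) \<longrightarrow> (\<exists>j'<n. \<not> propto_id (A j') \<and> cone_reach Ls j' j))"
  using assms
proof (induction Ls arbitrary: A)
  case Nil
  show ?case by (rule exI[of _ A]) (use Nil in auto)
next
  case (Cons L Ls)
  obtain B1 where B1: "\<forall>j<n. B1 j \<in> pauli1" "layer_op n L * tensor_all n A = tensor_all n B1 * layer_op n L"
    "\<forall>j<n. \<not> propto_id (B1 j) \<longrightarrow> (\<exists>j'<n. \<not> propto_id (A j') \<and> gate_link L j' j)"
    using layer_conj_pauli[of n L A] Cons.prems by auto
  obtain B2 where B2: "\<forall>j<n. B2 j \<in> pauli1" "circuit_op n Ls * tensor_all n B1 = tensor_all n B2 * circuit_op n Ls"
    "\<forall>j<n. \<not> propto_id (B2 j) \<longrightarrow> (\<exists>j'<n. \<not> propto_id (B1 j') \<and> cone_reach Ls j' j)"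
    using Cons.IH[of B1] Cons.prems B1(1) by auto
  have eq: "circuit_op n (L # Ls) * tensor_all n A = tensor_all n B2 * circuit_op n (L # Ls)"
  proof -
    have "circuit_op n (L # Ls) * tensor_all n A = circuit_op n Ls * (layer_op n L * tensor_all n A)"
      by (simp add: assoc_mult_mat_dims)
    also have "\<dots> = (circuit_op n Ls * tensor_all n B1) * layer_op n L"
      unfolding B1(2) by (simp add: assoc_mult_mat_dims)
    also have "\<dots> = tensor_all n B2 * circuit_op n (L # Ls)"
      unfolding B2(2) by (simp add: assoc_mult_mat_dims)
    finally show ?thesis .
  qed
  have supp: "\<exists>j'<n. \<not> propto_id (A j') \<and> cone_reach (L # Ls) j' j" if j: "j < n" "\<not> propto_id (B2 j)" for j
  proof -
    obtain j'' where j'': "j'' < n" "\<not> propto_id (B1 j'')" "cone_reach Ls j'' j"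
      using B2(3) j by blast
    obtain j' where j': "j' < n" "\<not> propto_id (A j')" "gate_link L j' j''"
      using B1(3) j'' by blast
    show ?thesis using j' j'' by auto
  qed
  show ?case using B2(1) eq supp by blast
qed

lemma noise_layer_eq_tensor_all: "noise_layer n f t = tensor_all n (\<lambda>j. f (t, j))"
  by (simp add: noise_layer_def tensor_on_def)

lemma tensor_all_mult:
  assumes "\<forall>j<n. A j \<in> pauli1" "\<forall>j<n. B j \<in> pauli1"
  shows "tensor_all n A * tensor_all n B = tensor_all n (\<lambda>j. A j * B j)"
  by (rule tensor_on_mult) (use assms pauli1_carrier in auto)

lemma tensor_all_one: "tensor_all n (\<lambda>_. 1\<^sub>m 2) = 1\<^sub>m (2^n)"
  by (rule tensor_on_one) auto

lemma noisy_exec_aux_push_noise: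
  assumes "\<forall>L\<in>set Ls. valid_layer n L"
    and "\<forall>t'. t \<le> t' \<and> t' < t + length Ls \<longrightarrow> (\<forall>j<n. f (t', j) \<in> pauli1)"
  shows "\<exists>A. (\<forall>j<n. A j \<in> pauli1) \<and> noisy_exec_aux n f t Ls = tensor_all n A * circuit_op n Ls \<and>
     (\<forall>j<n. \<not> propto_id (A j) \<longrightarrow> (\<exists>t'. t \<le> t' \<and> t' < t + length Ls \<and>
        (\<exists>j'<n. \<not> propto_id (f (t', j')) \<and> cone_reach (drop (t' - t + 1) Ls) j' j)))"
  using assms
proof (induction Ls arbitrary: t)
  case Nil
  show ?case
    by (rule exI[of _ "\<lambda>_. 1\<^sub>m 2"]) (simp add: tensor_all_one one_in_pauli1 propto_id_one)
next
  case (Cons L Ls)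
  obtain A1 where A1: "\<forall>j<n. A1 j \<in> pauli1" "noisy_exec_aux n f (Suc t) Ls = tensor_all n A1 * circuit_op n Ls"
    "\<forall>j<n. \<not> propto_id (A1 j) \<longrightarrow> (\<exists>t'. Suc t \<le> t' \<and> t' < Suc t + length Ls \<and>
        (\<exists>j'<n. \<not> propto_id (f (t', j')) \<and> cone_reach (drop (t' - Suc t + 1) Ls) j' j))"
    using Cons.IH[of "Suc t"] Cons.prems by auto
  have Ft: "\<forall>j<n. f (t, j) \<in> pauli1" using Cons.prems(2) by auto
  obtain C where C: "\<forall>j<n. C j \<in> pauli1" "circuit_op n Ls * tensor_all n (\<lambda>j. f (t, j)) = tensor_all n C * circuit_op n Ls"
    "\<forall>j<n. \<not> propto_id (C j) \<longrightarrow> (\<exists>j'<n. \<not> propto_id (f (t, j')) \<and> cone_reach Ls j' j)"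
    using circuit_conj_pauli[OF _ Ft, of Ls] Cons.prems(1) by auto
  have eq: "noisy_exec_aux n f t (L # Ls) = tensor_all n (\<lambda>j. A1 j * C j) * circuit_op n (L # Ls)"
  proof -
    have "noisy_exec_aux n f t (L # Ls) = tensor_all n A1 * (circuit_op n Ls * tensor_all n (\<lambda>j. f (t, j))) * layer_op n L"
      by (simp add: A1(2) noise_layer_eq_tensor_all assoc_mult_mat_dims)
    also have "\<dots> = (tensor_all n A1 * tensor_all n C) * circuit_op n (L # Ls)"
      unfolding C(2) by (simp add: assoc_mult_mat_dims)
    also have "tensor_all n A1 * tensor_all n C = tensor_all n (\<lambda>j. A1 j * C j)"
      by (rule tensor_all_mult[OF A1(1) C(1)])
    finally show ?thesis .
  qed
  have supp: "\<exists>t'. t \<le> t' \<and> t' < t + length (L # Ls) \<and>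
        (\<exists>j'<n. \<not> propto_id (f (t', j')) \<and> cone_reach (drop (t' - t + 1) (L # Ls)) j' j)"
    if j: "j < n" "\<not> propto_id (A1 j * C j)" for j
  proof (cases "propto_id (A1 j)")
    case False
    then obtain t' j' where tj: "Suc t \<le> t'" "t' < Suc t + length Ls" "j' < n" "\<not> propto_id (f (t', j'))"
      "cone_reach (drop (t' - Suc t + 1) Ls) j' j" using A1(3) j by blast
    have "drop (t' - t + 1) (L # Ls) = drop (t' - Suc t + 1) Ls" using tj(1)
      by (simp add: Suc_diff_Suc)
    then show ?thesis using tj by (intro exI[of _ t']) auto
  next
    case True
    then have "\<not> propto_id (C j)" using j propto_id_mult by blast
    then obtain j' where "j' < n" "\<not> propto_id (f (t, j'))" "cone_reach Ls j' j"
      using C(3) j by blast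
    then show ?thesis by (intro exI[of _ t]) auto
  qed
  show ?case using A1(1) C(1) eq supp pauli1_mult by (intro exI[of _ "\<lambda>j. A1 j * C j"]) auto
qed

lemma noisy_exec_aux_last_noise:
  assumes "Ls \<noteq> []" "\<forall>t'. t \<le> t' \<and> t' < t + length Ls - 1 \<longrightarrow> (\<forall>j<n. f (t', j) = 1\<^sub>m 2)"
  shows "noisy_exec_aux n f t Ls = tensor_all n (\<lambda>j. f (t + length Ls - 1, j)) * circuit_op n Ls"
  using assms
proof (induction Ls arbitrary: t)
  case Nil
  then show ?case
    by simp
next
  case (Cons L Ls)
  show ?case
  proof (cases "Ls = []")
    case True
    then show ?thesis by (simp add: noise_layer_eq_tensor_all)
  next
    case False
    have IH: "noisy_exec_aux n f (Suc t) Ls = tensor_all n (\<lambda>j. f (Suc t + length Ls - 1, j)) * circuit_op n Ls"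
      using Cons.IH[OF False] Cons.prems(2) by auto
    have "tensor_all n (\<lambda>j. f (t, j)) = tensor_all n (\<lambda>_. 1\<^sub>m 2)"
      by (rule tensor_on_cong) (use Cons.prems(2) False in auto)
    then have N: "noise_layer n f t = 1\<^sub>m (2^n)"
      by (simp add: noise_layer_eq_tensor_all tensor_all_one)
    have e: "Suc t + length Ls - 1 = t + length (L # Ls) - 1" using False by simp
    show ?thesis using IH N e by (simp add: assoc_mult_mat_dims)
  qed
qed

text \<open>Wire (t, i) is qubit i after layer t, so it reaches the output only through the
  layers drop t C.\<close>
definition past_cone :: "nat \<Rightarrow> circuit \<Rightarrow> nat \<Rightarrow> (nat \<times> nat) set" where
  "past_cone n C j = {(t, i). 1 \<le> t \<and> t \<le> length C \<and> i < n \<and> cone_reach (drop t C) i j}"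

definition last_layer_noise :: "nat \<Rightarrow> (nat \<Rightarrow> complex mat) \<Rightarrow> noise" where
  "last_layer_noise D A = (\<lambda>(t, j). if t = D then A j else 1\<^sub>m 2)"

lemma supp_last_layer_noise:
  "supp D n (last_layer_noise D A) \<subseteq> {(D, j) | j. j < n \<and> \<not> propto_id (A j)}"
  by (auto simp: supp_def wires_def last_layer_noise_def propto_id_def split: if_splits)
     (metis smult_one_mat)

lemma pauli_noise_last_layer_noise:
  "\<forall>j<n. A j \<in> pauli1 \<Longrightarrow> pauli_noise D n (last_layer_noise D A)"
  by (auto simp: pauli_noise_def wires_def last_layer_noise_def one_in_pauli1)

lemma noisy_exec_push_to_last_layer:
  assumes C: "clifford_circuit_12 D n C" and D: "D \<ge> 1" and f: "pauli_noise D n f"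
  shows "\<exists>A. (\<forall>j<n. A j \<in> pauli1)
           \<and> noisy_exec n C f = noisy_exec n C (last_layer_noise D A)
           \<and> (\<forall>j<n. \<not> propto_id (A j) \<longrightarrow> (\<exists>v\<in>past_cone n C j. v \<in> supp D n f))"
proof -
  have valid: "\<forall>L\<in>set C. valid_layer n L" and len: "length C = D"
    using C by (auto simp: clifford_circuit_12_def)
  have "\<forall>t'. 1 \<le> t' \<and> t' < 1 + length C \<longrightarrow> (\<forall>j<n. f (t', j) \<in> pauli1)"
    using f len by (auto simp: pauli_noise_def wires_def)
  from noisy_exec_aux_push_noise[OF valid this] obtain A where
    A: "\<forall>j<n. A j \<in> pauli1" "noisy_exec_aux n f 1 C = tensor_all n A * circuit_op n C"
    and cone: "\<forall>j<n. \<not> propto_id (A j) \<longrightarrow> (\<exists>t'. 1 \<le> t' \<and> t' < 1 + length C \<and>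
        (\<exists>j'<n. \<not> propto_id (f (t', j')) \<and> cone_reach (drop (t' - 1 + 1) C) j' j))"
    by blast
  have "C \<noteq> []"
    using len D by auto
  then have "noisy_exec n C (last_layer_noise D A) = tensor_all n (\<lambda>j. last_layer_noise D A (D, j)) * circuit_op n C"
    unfolding noisy_exec_def using noisy_exec_aux_last_noise[of C 1 n "last_layer_noise D A"] len D
    by (simp add: last_layer_noise_def)
  then have "noisy_exec n C f = noisy_exec n C (last_layer_noise D A)"
    using A(2) by (simp add: noisy_exec_def last_layer_noise_def)
  moreover have "\<exists>v\<in>past_cone n C j. v \<in> supp D n f" if j: "j < n" "\<not> propto_id (A j)" for j
  proof -
    obtain t' j' where "1 \<le> t'" "t' < 1 + length C" "j' < n" "\<not> propto_id (f (t', j'))"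
      "cone_reach (drop (t' - 1 + 1) C) j' j"
      using cone j by blast
    then have "(t', j') \<in> past_cone n C j" "(t', j') \<in> supp D n f"
      using len by (auto simp: past_cone_def supp_def wires_def propto_id_def)
    then show ?thesis
      by blast
  qed
  ultimately show ?thesis
    using A(1) by blast
qed

section \<open>Light cones\<close>

lemma valid_layer_gate_unique:
  assumes "valid_layer n L" "g \<in> set L" "g' \<in> set L" "a \<in> set (fst g)" "a \<in> set (fst g')"
  shows "g = g'"
proof -
  obtain i where i: "i < length L" "L ! i = g" using assms(2) by (auto simp: in_set_conv_nth)
  obtain i' where i': "i' < length L" "L ! i' = g'" using assms(3) by (auto simp: in_set_conv_nth)
  show ?thesis
  proof (cases "i = i'")
    case True then show ?thesis using i i' by simp
  next
    case False
    then have "set (fst g) \<inter> set (fst g') = {}"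
      using assms(1) i i' by (auto simp: valid_layer_def)
    then show ?thesis using assms(4,5) by blast
  qed
qed

lemma gate_link_sym: "gate_link L a b = gate_link L b a"
  by (auto simp: gate_link_def)

lemma gate_link_card:
  assumes "valid_layer n L"
  shows "finite {b. gate_link L a b} \<and> card {b. gate_link L a b} \<le> 2"
proof (cases "\<exists>g\<in>set L. a \<in> set (fst g)")
  case True
  then obtain g where g: "g \<in> set L" "a \<in> set (fst g)" by blast
  have sub: "{b. gate_link L a b} \<subseteq> set (fst g)"
  proof
    fix b assume "b \<in> {b. gate_link L a b}"
    then have "a = b \<or> (\<exists>g'\<in>set L. a \<in> set (fst g') \<and> b \<in> set (fst g'))"
      by (simp add: gate_link_def)
    then show "b \<in> set (fst g)"
      using g valid_layer_gate_unique[OF assms g(1)] by blast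
  qed
  have vg: "valid_gate_12 n g" using assms g(1) by (simp add: valid_layer_def)
  have "length (fst g) \<in> {1, 2}" using vg by (cases g) (simp add: valid_gate_12_def)
  then have "length (fst g) \<le> 2" by auto
  then have "card (set (fst g)) \<le> 2" using card_length order_trans by blast
  then show ?thesis using sub card_mono[OF finite_set sub] finite_subset[OF sub] by simp
next
  case False
  then have "{b. gate_link L a b} = {a}" by (auto simp: gate_link_def)
  then show ?thesis by simp
qed

lemma cone_reach_card_fwd:
  assumes "\<forall>L\<in>set Ls. valid_layer n L"
  shows "finite {b. cone_reach Ls a b} \<and> card {b. cone_reach Ls a b} \<le> 2 ^ length Ls"
  using assms
proof (induction Ls arbitrary: a)
  case Nil
  then show ?case
    by simp
next
  case (Cons L Ls)
  have eq: "{b. cone_reach (L # Ls) a b} = (\<Union>c\<in>{c. gate_link L a c}. {b. cone_reach Ls c b})"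
    by auto
  have RL: "finite {c. gate_link L a c}" "card {c. gate_link L a c} \<le> 2"
    using gate_link_card[of n L a] Cons.prems by auto
  have IH: "finite {b. cone_reach Ls c b} \<and> card {b. cone_reach Ls c b} \<le> 2 ^ length Ls" for c
    using Cons.IH Cons.prems by auto
  have "card {b. cone_reach (L # Ls) a b} \<le> (\<Sum>c\<in>{c. gate_link L a c}. card {b. cone_reach Ls c b})"
    unfolding eq by (rule card_UN_le[OF RL(1)])
  also have "\<dots> \<le> card {c. gate_link L a c} * 2 ^ length Ls"
    using sum_bounded_above[of "{c. gate_link L a c}" "\<lambda>c. card {b. cone_reach Ls c b}" "2 ^ length Ls"] IH by simp
  also have "\<dots> \<le> 2 * 2 ^ length Ls" using RL(2) by simp
  finally show ?case using eq RL IH by auto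
qed

lemma cone_reach_card_bwd:
  assumes "\<forall>L\<in>set Ls. valid_layer n L"
  shows "finite {a. cone_reach Ls a b} \<and> card {a. cone_reach Ls a b} \<le> 2 ^ length Ls"
  using assms
proof (induction Ls)
  case Nil
  then show ?case
    by simp
next
  case (Cons L Ls)
  have eq: "{a. cone_reach (L # Ls) a b} = (\<Union>c\<in>{c. cone_reach Ls c b}. {a. gate_link L c a})"
    by (auto simp: gate_link_sym)
  have RL: "finite {a. gate_link L c a} \<and> card {a. gate_link L c a} \<le> 2" for c using gate_link_card[of n L c] Cons.prems by auto
  have IH: "finite {c. cone_reach Ls c b}" "card {c. cone_reach Ls c b} \<le> 2 ^ length Ls"
    using Cons.IH Cons.prems by auto
  have "card {a. cone_reach (L # Ls) a b} \<le> (\<Sum>c\<in>{c. cone_reach Ls c b}. card {a. gate_link L c a})"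
    unfolding eq by (rule card_UN_le[OF IH(1)])
  also have "\<dots> \<le> card {c. cone_reach Ls c b} * 2"
    using sum_bounded_above[of "{c. cone_reach Ls c b}" "\<lambda>c. card {a. gate_link L c a}" 2] RL by simp
  also have "\<dots> \<le> 2 ^ length Ls * 2" using IH(2) by simp
  finally show ?case using eq RL IH by auto
qed

lemma finite_card_past_cone:
  assumes "\<forall>L\<in>set C. valid_layer n L"
  shows "finite (past_cone n C j) \<and> card (past_cone n C j) \<le> length C * 2 ^ (length C - 1)"
proof -
  let ?S = "\<lambda>t. {i. cone_reach (drop t C) i j}"
  have S: "finite (?S t) \<and> card (?S t) \<le> 2 ^ (length C - 1)" if "1 \<le> t" for t
  proof -
    have "\<forall>L\<in>set (drop t C). valid_layer n L"
      using assms by (auto dest: in_set_dropD)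
    then have "finite (?S t)" "card (?S t) \<le> 2 ^ length (drop t C)"
      using cone_reach_card_bwd[of "drop t C" n j] by auto
    moreover have "2 ^ length (drop t C) \<le> (2::nat) ^ (length C - 1)"
      using that by (intro power_increasing) auto
    ultimately show ?thesis
      by (meson order_trans)
  qed
  have sub: "past_cone n C j \<subseteq> (\<Union>t\<in>{1..length C}. {t} \<times> ?S t)"
    by (auto simp: past_cone_def)
  have fin: "finite (\<Union>t\<in>{1..length C}. {t} \<times> ?S t)"
    using S by auto
  have "card (past_cone n C j) \<le> card (\<Union>t\<in>{1..length C}. {t} \<times> ?S t)"
    by (rule card_mono[OF fin sub])
  also have "\<dots> \<le> (\<Sum>t\<in>{1..length C}. card ({t} \<times> ?S t))"
    by (rule card_UN_le) simp
  also have "\<dots> \<le> (\<Sum>t\<in>{1..length C}. 2 ^ (length C - 1))"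
    by (rule sum_mono) (use S in \<open>simp add: card_cartesian_product_singleton\<close>)
  finally show ?thesis
    using finite_subset[OF sub fin] by simp
qed

lemma finite_card_past_cones_containing:
  assumes "\<forall>L\<in>set C. valid_layer n L"
  shows "finite {j. v \<in> past_cone n C j} \<and> card {j. v \<in> past_cone n C j} \<le> 2 ^ (length C - 1)"
proof (cases "fst v \<in> {1..length C} \<and> snd v < n")
  case True
  obtain t i where v: "v = (t, i)" "1 \<le> t" "t \<le> length C" "i < n"
    using True by (cases v) auto
  have "{j. v \<in> past_cone n C j} = {j. cone_reach (drop t C) i j}"
    using v by (auto simp: past_cone_def)
  have "\<forall>L\<in>set (drop t C). valid_layer n L"
    using assms by (auto dest: in_set_dropD)
  then have "finite {j. cone_reach (drop t C) i j}" "card {j. cone_reach (drop t C) i j} \<le> 2 ^ length (drop t C)"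
    using cone_reach_card_fwd[of "drop t C" n i] by auto
  moreover have "2 ^ length (drop t C) \<le> (2::nat) ^ (length C - 1)"
    using v by (intro power_increasing) auto
  ultimately show ?thesis
    unfolding \<open>{j. v \<in> past_cone n C j} = {j. cone_reach (drop t C) i j}\<close> by (meson order_trans)
next
  case False
  then have "{j. v \<in> past_cone n C j} = {}"
    by (auto simp: past_cone_def)
  then show ?thesis
    by simp
qed

section \<open>The probability bound\<close>

lemma card_le_mult_card_image:
  assumes "finite W" "\<And>v. v \<in> g ` W \<Longrightarrow> card {w\<in>W. g w = v} \<le> m"
  shows "card W \<le> m * card (g ` W)"
proof -
  have "card W = card (\<Union>v\<in>g ` W. {w\<in>W. g w = v})"
    by (rule arg_cong[where f = card]) auto
  also have "\<dots> \<le> (\<Sum>v\<in>g ` W. card {w\<in>W. g w = v})"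
    using assms(1) by (intro card_UN_le) simp
  also have "\<dots> \<le> (\<Sum>v\<in>g ` W. m)"
    by (rule sum_mono) (rule assms(2))
  finally show ?thesis
    by (simp add: mult.commute)
qed

text \<open>A choice of one point per cone hits at least |W|/m distinct points, since no point lies
  in more than m cones.\<close>
lemma prob_choice_hit_le:
  fixes M :: "'w pmf" and S :: "'w \<Rightarrow> 'a set" and cone :: "'b \<Rightarrow> 'a set"
  assumes W: "finite W"
    and overlap: "\<forall>v. card {w\<in>W. v \<in> cone w} \<le> m"
    and prob: "\<And>V. V \<subseteq> (\<Union>w\<in>W. cone w) \<Longrightarrow> measure_pmf.prob M {\<omega>. V \<subseteq> S \<omega>} \<le> q ^ (m * card V)"
    and q: "0 \<le> q" "q \<le> 1"
    and g: "g \<in> (\<Pi>\<^sub>E w\<in>W. cone w)"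
  shows "measure_pmf.prob M {\<omega>. g ` W \<subseteq> S \<omega>} \<le> q ^ card W"
proof -
  have "card W \<le> m * card (g ` W)"
  proof (rule card_le_mult_card_image[OF W])
    fix v
    have "card {w\<in>W. g w = v} \<le> card {w\<in>W. v \<in> cone w}"
      using g W by (intro card_mono) auto
    then show "card {w\<in>W. g w = v} \<le> m"
      using overlap le_trans by blast
  qed
  moreover have "g ` W \<subseteq> (\<Union>w\<in>W. cone w)"
    using g by auto
  then have "measure_pmf.prob M {\<omega>. g ` W \<subseteq> S \<omega>} \<le> q ^ (m * card (g ` W))"
    by (rule prob)
  ultimately show ?thesis
    using power_decreasing[OF _ q] by (meson order_trans)
qed

text \<open>Union bound over all ways of choosing one hit point per cone.\<close>
lemma prob_all_cones_hit_le:
  fixes M :: "'w pmf" and S :: "'w \<Rightarrow> 'a set" and cone :: "'b \<Rightarrow> 'a set"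
  assumes W: "finite W"
    and cone: "\<forall>w\<in>W. finite (cone w) \<and> card (cone w) \<le> K"
    and overlap: "\<forall>v. card {w\<in>W. v \<in> cone w} \<le> m"
    and prob: "\<And>V. V \<subseteq> (\<Union>w\<in>W. cone w) \<Longrightarrow> measure_pmf.prob M {\<omega>. V \<subseteq> S \<omega>} \<le> q ^ (m * card V)"
    and q: "0 \<le> q" "q \<le> 1"
  shows "measure_pmf.prob M {\<omega>. \<forall>w\<in>W. \<exists>v\<in>cone w. v \<in> S \<omega>} \<le> (real K * q) ^ card W"
proof -
  let ?P = "\<Pi>\<^sub>E w\<in>W. cone w"
  have choice: "{\<omega>. \<forall>w\<in>W. \<exists>v\<in>cone w. v \<in> S \<omega>} \<subseteq> (\<Union>g\<in>?P. {\<omega>. g ` W \<subseteq> S \<omega>})"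
  proof
    fix \<omega> assume "\<omega> \<in> {\<omega>. \<forall>w\<in>W. \<exists>v\<in>cone w. v \<in> S \<omega>}"
    then obtain g where "\<forall>w\<in>W. g w \<in> cone w \<and> g w \<in> S \<omega>"
      by (auto simp: Bex_def) metis
    then have "restrict g W \<in> ?P" "restrict g W ` W \<subseteq> S \<omega>"
      by auto
    then show "\<omega> \<in> (\<Union>g\<in>?P. {\<omega>. g ` W \<subseteq> S \<omega>})"
      by blast
  qed
  have each: "measure_pmf.prob M {\<omega>. g ` W \<subseteq> S \<omega>} \<le> q ^ card W" if "g \<in> ?P" for g
    using prob_choice_hit_le[OF W overlap prob q that] .
  have "finite ?P"
    using W cone by (intro finite_PiE) auto
  have "measure_pmf.prob M {\<omega>. \<forall>w\<in>W. \<exists>v\<in>cone w. v \<in> S \<omega>}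
      \<le> measure_pmf.prob M (\<Union>g\<in>?P. {\<omega>. g ` W \<subseteq> S \<omega>})"
    by (rule measure_pmf.finite_measure_mono[OF choice]) simp
  also have "\<dots> \<le> (\<Sum>g\<in>?P. measure_pmf.prob M {\<omega>. g ` W \<subseteq> S \<omega>})"
    by (rule measure_UNION_le[OF \<open>finite ?P\<close>]) simp
  also have "\<dots> \<le> real (card ?P) * q ^ card W"
    using sum_mono[OF each] by simp
  also have "\<dots> \<le> real K ^ card W * q ^ card W"
  proof -
    have "card ?P = (\<Prod>w\<in>W. card (cone w))"
      by (rule card_PiE[OF W])
    also have "\<dots> \<le> K ^ card W"
      using prod_mono[of W "\<lambda>w. card (cone w)" "\<lambda>_. K"] cone by simp
    finally show ?thesis
      using q by (intro mult_right_mono) (simp_all flip: of_nat_power)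
  qed
  finally show ?thesis
    by (simp add: power_mult_distrib)
qed

lemma two_pow_mult_pow_le:
  fixes x :: real
  assumes D: "D \<ge> 1" and x: "0 \<le> x" "real D * x \<le> 1"
  shows "2 ^ (D - 1) * x ^ D \<le> x"
proof -
  have "(2 * x) ^ (D - 1) \<le> 1"
  proof (cases "D = 1")
    case False
    then have "2 * x \<le> real D * x"
      using D x(1) by (intro mult_right_mono) auto
    then show ?thesis
      using x by (intro power_le_one) auto
  qed simp
  have "2 ^ (D - 1) * x ^ D = x * (2 * x) ^ (D - 1)"
    using D by (cases D) (simp_all add: power_mult_distrib)
  also have "\<dots> \<le> x"
    using mult_left_mono[OF \<open>(2 * x) ^ (D - 1) \<le> 1\<close> x(1)] by simp
  finally show ?thesis .
qed

lemma powr_root_pow: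
  fixes p :: real
  assumes "0 \<le> p" "m > 0"
  shows "(p powr (1 / real m)) ^ m = p"
proof (cases "p = 0")
  case False
  then show ?thesis
    using assms by (simp add: powr_realpow[symmetric] powr_powr)
qed (use assms in simp)

lemma strength_bound:
  fixes q :: real
  assumes D: "D \<ge> 1" and q: "0 \<le> q" and lt: "real D * (2 * q) powr (1 / real D) < 1"
  shows "q \<le> 1" "real D * 2 ^ (D - 1) * q \<le> real D * (2 * q) powr (1 / real D)"
proof -
  define x where "x = (2 * q) powr (1 / real D)"
  have x: "0 \<le> x" "real D * x < 1" "x ^ D = 2 * q"
    using lt powr_root_pow[of "2 * q" D] D q by (auto simp: x_def)
  then have "x < 1"
    using D by (smt (verit) mult_le_cancel_right1 of_nat_1 of_nat_mono)
  then have "x ^ D \<le> 1"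
    using x(1) by (intro power_le_one) auto
  then show "q \<le> 1"
    using x(3) by simp
  have "2 ^ (D - 1) * (2 * q) \<le> x"
    using two_pow_mult_pow_le[OF D x(1)] x by simp
  moreover have "2 ^ (D - 1) * q \<le> 2 ^ (D - 1) * (2 * q)"
    using q by (intro mult_left_mono) auto
  ultimately have "2 ^ (D - 1) * q \<le> x"
    by linarith
  then show "real D * 2 ^ (D - 1) * q \<le> real D * (2 * q) powr (1 / real D)"
    unfolding x_def[symmetric] mult.assoc by (intro mult_left_mono) auto
qed

lemma powr_two_powr_pow:
  fixes p :: real
  assumes "0 \<le> p" "D \<ge> 1"
  shows "(p powr (2 powr (- (real D - 1)))) ^ (2 ^ (D - 1)) = p"
proof -
  have "2 powr (- (real D - 1)) = 1 / 2 powr (real D - 1)"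
    by (rule powr_minus_divide)
  also have "2 powr (real D - 1) = real (2 ^ (D - 1) :: nat)"
    using assms(2) by (simp add: powr_realpow[symmetric] of_nat_diff)
  finally have "2 powr (- (real D - 1)) = 1 / real (2 ^ (D - 1) :: nat)" .
  then show ?thesis
    using powr_root_pow[OF assms(1), of "2 ^ (D - 1)"] by simp
qed

lemma prob_hit_past_cones_le:
  fixes M :: "'\<omega> pmf"
  assumes C: "clifford_circuit_12 D n C" and F: "local_stochastic M D n p F"
    and q: "0 \<le> q" "q \<le> 1" "q ^ (2 ^ (D - 1)) = p" and W: "W \<subseteq> {D} \<times> {0..<n}"
  shows "measure_pmf.prob M {\<omega>. \<forall>w\<in>W. \<exists>v\<in>past_cone n C (snd w). v \<in> supp D n (F \<omega>)}
           \<le> (real (D * 2 ^ (D - 1)) * q) ^ card W"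
proof (rule prob_all_cones_hit_le)
  have valid: "\<forall>L\<in>set C. valid_layer n L" and len: "length C = D"
    using C by (auto simp: clifford_circuit_12_def)
  show "finite W"
    using W finite_subset by blast
  show "\<forall>w\<in>W. finite (past_cone n C (snd w)) \<and> card (past_cone n C (snd w)) \<le> D * 2 ^ (D - 1)"
    using finite_card_past_cone[OF valid] by (simp add: len)
  show "\<forall>v. card {w\<in>W. v \<in> past_cone n C (snd w)} \<le> 2 ^ (D - 1)"
  proof
    fix v
    have "{w\<in>W. v \<in> past_cone n C (snd w)} \<subseteq> (\<lambda>j. (D, j)) ` {j. v \<in> past_cone n C j}"
      using W by auto
    then have "card {w\<in>W. v \<in> past_cone n C (snd w)} \<le> card {j. v \<in> past_cone n C j}"
      using finite_card_past_cones_containing[OF valid, of v]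
      by (meson card_image_le card_mono finite_imageI order_trans)
    then show "card {w\<in>W. v \<in> past_cone n C (snd w)} \<le> 2 ^ (D - 1)"
      using finite_card_past_cones_containing[OF valid, of v] len by simp
  qed
  show "measure_pmf.prob M {\<omega>. V \<subseteq> supp D n (F \<omega>)} \<le> q ^ (2 ^ (D - 1) * card V)"
    if "V \<subseteq> (\<Union>w\<in>W. past_cone n C (snd w))" for V
  proof -
    have "V \<subseteq> wires D n"
      using that len by (auto simp: past_cone_def wires_def)
    then show ?thesis
      using F q(3) by (simp add: local_stochastic_def power_mult)
  qed
qed (use q in auto)

lemma prob_supp_last_layer_noise_le:
  fixes M :: "'\<omega> pmf" and A :: "'\<omega> \<Rightarrow> nat \<Rightarrow> complex mat"
  assumes D: "D \<ge> 1" and p: "0 \<le> p" and C: "clifford_circuit_12 D n C"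
    and F: "local_stochastic M D n p F"
    and A: "\<forall>\<omega> j. j < n \<longrightarrow> \<not> propto_id (A \<omega> j) \<longrightarrow> (\<exists>v\<in>past_cone n C j. v \<in> supp D n (F \<omega>))"
  shows "measure_pmf.prob M {\<omega>. W \<subseteq> supp D n (last_layer_noise D (A \<omega>))}
           \<le> (real D * (2 * p powr (2 powr (- (real D - 1)))) powr (1 / real D)) ^ card W"
proof -
  define q where "q = p powr (2 powr (- (real D - 1)))"
  let ?p' = "real D * (2 * q) powr (1 / real D)"
  let ?E = "{\<omega>. W \<subseteq> supp D n (last_layer_noise D (A \<omega>))}"
  have q: "0 \<le> q" "q ^ (2 ^ (D - 1)) = p"
    using powr_two_powr_pow[OF p D] by (simp_all add: q_def)
  consider "1 \<le> ?p'" | "\<not> W \<subseteq> {D} \<times> {0..<n}" | "?p' < 1" "W \<subseteq> {D} \<times> {0..<n}"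
    by (meson not_le)
  then have "measure_pmf.prob M ?E \<le> ?p' ^ card W"
  proof cases
    case 1
    then show ?thesis
      using measure_pmf.prob_le_1[of M ?E] one_le_power[OF 1, of "card W"] by linarith
  next
    case 2
    have "W \<subseteq> {D} \<times> {0..<n}" if "W \<subseteq> supp D n (last_layer_noise D (A \<omega>))" for \<omega>
      using that supp_last_layer_noise[of D n "A \<omega>"] by auto
    then have "?E = {}"
      using 2 by auto
    then show ?thesis
      by simp
  next
    case 3
    have q_le: "q \<le> 1" "real D * 2 ^ (D - 1) * q \<le> ?p'"
      using strength_bound[OF D q(1) 3(1)] by auto
    have "?E \<subseteq> {\<omega>. \<forall>w\<in>W. \<exists>v\<in>past_cone n C (snd w). v \<in> supp D n (F \<omega>)}"
    proof (intro subsetI CollectI ballI)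
      fix \<omega> w assume "\<omega> \<in> ?E" "w \<in> W"
      then obtain j where "w = (D, j)" "j < n" "\<not> propto_id (A \<omega> j)"
        using supp_last_layer_noise[of D n "A \<omega>"] by blast
      then show "\<exists>v\<in>past_cone n C (snd w). v \<in> supp D n (F \<omega>)"
        using A by simp
    qed
    then have "measure_pmf.prob M ?E
        \<le> measure_pmf.prob M {\<omega>. \<forall>w\<in>W. \<exists>v\<in>past_cone n C (snd w). v \<in> supp D n (F \<omega>)}"
      by (rule measure_pmf.finite_measure_mono) simp
    also have "\<dots> \<le> (real (D * 2 ^ (D - 1)) * q) ^ card W"
      using prob_hit_past_cones_le[OF C F q(1) q_le(1) q(2) 3(2)] .
    also have "\<dots> \<le> ?p' ^ card W"
      using q q_le by (intro power_mono) (simp_all add: mult.assoc)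
    finally show ?thesis .
  qed
  then show ?thesis
    by (simp add: q_def)
qed

theorem lemma5p1p2:
  fixes M :: "'\<omega> pmf" and D n :: nat and p :: real
    and C :: circuit and F :: "'\<omega> \<Rightarrow> noise"
  assumes "D \<ge> 1"
    and "0 \<le> p"
    and "clifford_circuit_12 D n C"
    and "local_stochastic M D n p F"
  shows "\<exists>F' :: '\<omega> \<Rightarrow> noise.
           local_stochastic M D n
             (real D * (2 * p powr (2 powr (- (real D - 1)))) powr (1 / real D)) F'
         \<and> (\<forall>\<omega>. supp D n (F' \<omega>) \<subseteq> {D} \<times> {0..<n})
         \<and> (\<forall>\<omega>. noisy_exec n C (F \<omega>) = noisy_exec n C (F' \<omega>))"
proof -
  have "\<forall>\<omega>. \<exists>A. (\<forall>j<n. A j \<in> pauli1)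
           \<and> noisy_exec n C (F \<omega>) = noisy_exec n C (last_layer_noise D A)
           \<and> (\<forall>j<n. \<not> propto_id (A j) \<longrightarrow> (\<exists>v\<in>past_cone n C j. v \<in> supp D n (F \<omega>)))"
    using noisy_exec_push_to_last_layer[OF assms(3,1)] assms(4) by (simp add: local_stochastic_def)
  then obtain A where A: "\<forall>\<omega>. (\<forall>j<n. A \<omega> j \<in> pauli1)
           \<and> noisy_exec n C (F \<omega>) = noisy_exec n C (last_layer_noise D (A \<omega>))
           \<and> (\<forall>j<n. \<not> propto_id (A \<omega> j) \<longrightarrow> (\<exists>v\<in>past_cone n C j. v \<in> supp D n (F \<omega>)))"
    by metis
  let ?F' = "\<lambda>\<omega>. last_layer_noise D (A \<omega>)"
  have "local_stochastic M D n (real D * (2 * p powr (2 powr (- (real D - 1)))) powr (1 / real D)) ?F'"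
    unfolding local_stochastic_def
    using A pauli_noise_last_layer_noise prob_supp_last_layer_noise_le[OF assms] by blast
  moreover have "supp D n (?F' \<omega>) \<subseteq> {D} \<times> {0..<n}" for \<omega>
    using supp_last_layer_noise[of D n "A \<omega>"] by auto
  ultimately show ?thesis
    using A by blast
qed

end
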